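(* Let $v_1,v_2\in L_2(0,1)$ and $\alpha\in[0,2\pi)$. Let $A(v_1,v_2,\alpha)$ act in $L_2(0,1)$ by $$A(v_1,v_2,\alpha)\psi(x)=i\psi'(x)+v_1(x)\Big[\psi(0)-\tfrac{i}{2}\langle\psi,v_1\rangle\Big]+v_2(x)\Big[\psi(1)+\tfrac{i}{2}\langle\psi,v_2\rangle\Big]$$ on the domain of $\psi\in W_2^1(0,1)$ with $\psi(1)+i\langle\psi,v_2\rangle=e^{i\alpha}[\psi(0)-i\langle\psi,v_1\rangle]$. Then $A(v_1,v_2,\alpha)$ is self-adjoint in $L_2(0,1)$, and for nonreal $z$ its resolvent is the integral operator with kernel $$g_z(x,y;v_1,v_2,\alpha)=g_z(x,y;\alpha)-\frac{1}{\gamma}\sum_{j,k=1}^2\mathcal{E}_j(x,z)\gamma_{jk}\overline{\mathcal{E}_k(y,\bar z)},$$ where $E_0(x,z)=g_z(x,1;\alpha)$, $E_k(x,z)=\int_0^1g_z(x,y;\alpha)v_k(y)\,dy$ ($k=1,2$), $\mathcal{E}_1=E_1-2ie^{i\alpha}E_0$, $\mathcal{E}_2=E_2+2iE_0$, and, writing $E_j$ for $E_j(\cdot,z)$, $$\gamma_{11}(z)=-2i\Big(1+2i\beta(z)-\langle E_0,v_2\rangle+\langle v_2,E_0(\cdot,\bar z)\rangle+\tfrac{i}{2}\langle E_2,v_2\rangle\Big),$$ $$\gamma_{12}(z)=-2i\Big(2ie^{iz}\beta(z)+\langle E_0,v_1\rangle+e^{-i\alpha}\langle v_2,E_0(\cdot,\bar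 z)\rangle-\tfrac{i}{2}\langle E_2,v_1\rangle\Big),$$ $$\gamma_{21}(z)=2i\Big(-2ie^{i\alpha}\beta(z)+e^{i\alpha}\langle E_0,v_2\rangle+\langle v_1,E_0(\cdot,\bar z)\rangle+\tfrac{i}{2}\langle E_1,v_2\rangle\Big),$$ $$\gamma_{22}(z)=2i\Big(1-2ie^{i\alpha}e^{iz}\beta(z)-e^{i\alpha}\langle E_0,v_1\rangle+e^{-i\alpha}\langle v_1,E_0(\cdot,\bar z)\rangle-\tfrac{i}{2}\langle E_1,v_1\rangle\Big),$$ $\gamma=\gamma_{11}\gamma_{22}-\gamma_{12}\gamma_{21}$. The matrix $\Gamma(z)=\|\gamma_{jk}(z)\|$ satisfies $\Gamma^*(\bar z)=\Gamma(z)$ and $\overline{\gamma(\bar z)}=\gamma(z)\neq0$.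
   Context: $\langle f,g\rangle=\int_0^1 f\bar g\,dx$; $\theta$ is the Heaviside function. $g_z(x,y;\alpha)=e^{-iz(x-y)}[-i\theta(x-y)+\beta(z)]$ with $\beta(z)=\frac{ie^{-iz}}{e^{-iz}-e^{i\alpha}}$ is the resolvent kernel of the self-adjoint operator $i\,d/dx$ in $L_2(0,1)$ with domain $\{\psi\in W_2^1(0,1):\psi(1)=e^{i\alpha}\psi(0)\}$. *)

theory Defs
  imports "HOL-Analysis.Analysis"
begin

text \<open>Functions on (0,1) are represented as maps real \<Rightarrow> complex; only their
values on [0,1] matter. L_2(0,1) membership, inner product, norm, a.e. equality.\<close>

definition L2 :: "(real \<Rightarrow> complex) \<Rightarrow> bool" where
  "L2 f \<longleftrightarrow> f \<in> borel_measurable (lebesgue_on {0..1})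
           \<and> integrable (lebesgue_on {0..1}) (\<lambda>x. (cmod (f x))^2)"

definition ip :: "(real \<Rightarrow> complex) \<Rightarrow> (real \<Rightarrow> complex) \<Rightarrow> complex" where
  "ip f g = (LINT x|lebesgue_on {0..1}. f x * cnj (g x))"

definition L2norm :: "(real \<Rightarrow> complex) \<Rightarrow> real" where
  "L2norm f = sqrt (LINT x|lebesgue_on {0..1}. (cmod (f x))^2)"

definition ae_eq :: "(real \<Rightarrow> complex) \<Rightarrow> (real \<Rightarrow> complex) \<Rightarrow> bool" where
  "ae_eq f g \<longleftrightarrow> (AE x in lebesgue_on {0..1}. f x = g x)"

text \<open>psi in W_2^1(0,1) with (weak) derivative phi in L_2: psi is the absolutely
continuous function psi(x) = psi(0) + int_0^x phi on [0,1].\<close>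
definition W21 :: "(real \<Rightarrow> complex) \<Rightarrow> (real \<Rightarrow> complex) \<Rightarrow> bool" where
  "W21 psi phi \<longleftrightarrow> L2 phi \<and>
     (\<forall>x\<in>{0..1}. psi x = psi 0 + (LINT t|lebesgue_on {0..x}. phi t))"

text \<open>Self-adjointness of an operator given by its graph G (a relation on
L_2 functions, understood modulo a.e. equality): dense domain and G equals its adjoint.\<close>
definition self_adjoint_graph :: "((real \<Rightarrow> complex) \<times> (real \<Rightarrow> complex)) set \<Rightarrow> bool" where
  "self_adjoint_graph G \<longleftrightarrow>
     (\<forall>f. L2 f \<longrightarrow> (\<forall>\<epsilon>>0. \<exists>(psi, g)\<in>G. L2norm (\<lambda>x. f x - psi x) < \<epsilon>)) \<and>
     (\<forall>u w. L2 u \<and> L2 w \<longrightarrow>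
        ((\<forall>(psi, g)\<in>G. ip g u = ip psi w) \<longleftrightarrow> (\<exists>(psi, g)\<in>G. ae_eq u psi \<and> ae_eq w g)))"

definition Agraph :: "(real \<Rightarrow> complex) \<Rightarrow> (real \<Rightarrow> complex) \<Rightarrow> real
     \<Rightarrow> ((real \<Rightarrow> complex) \<times> (real \<Rightarrow> complex)) set" where
  "Agraph v1 v2 \<alpha> = {(psi, f). \<exists>phi. W21 psi phi \<and>
      psi 1 + \<i> * ip psi v2 = exp (\<i> * of_real \<alpha>) * (psi 0 - \<i> * ip psi v1) \<and>
      (\<forall>x. f x = \<i> * phi x + v1 x * (psi 0 - \<i>/2 * ip psi v1)
                             + v2 x * (psi 1 + \<i>/2 * ip psi v2))}"

definition heaviside :: "real \<Rightarrow> complex" where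
  "heaviside t = (if t > 0 then 1 else 0)"

definition beta :: "real \<Rightarrow> complex \<Rightarrow> complex" where
  "beta \<alpha> z = \<i> * exp (- \<i> * z) / (exp (- \<i> * z) - exp (\<i> * of_real \<alpha>))"

definition gfree :: "real \<Rightarrow> complex \<Rightarrow> real \<Rightarrow> real \<Rightarrow> complex" where
  "gfree \<alpha> z x y = exp (- \<i> * z * of_real (x - y)) * (- \<i> * heaviside (x - y) + beta \<alpha> z)"

definition E0 :: "real \<Rightarrow> complex \<Rightarrow> real \<Rightarrow> complex" where
  "E0 \<alpha> z x = gfree \<alpha> z x 1"

definition Ev :: "real \<Rightarrow> complex \<Rightarrow> (real \<Rightarrow> complex) \<Rightarrow> real \<Rightarrow> complex" where
  "Ev \<alpha> z v x = (LINT y|lebesgue_on {0..1}. gfree \<alpha> z x y * v y)"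

definition calE :: "real \<Rightarrow> (real \<Rightarrow> complex) \<Rightarrow> (real \<Rightarrow> complex) \<Rightarrow> nat \<Rightarrow> complex \<Rightarrow> real \<Rightarrow> complex" where
  "calE \<alpha> v1 v2 j z x =
     (if j = 1 then Ev \<alpha> z v1 x - 2 * \<i> * exp (\<i> * of_real \<alpha>) * E0 \<alpha> z x
      else Ev \<alpha> z v2 x + 2 * \<i> * E0 \<alpha> z x)"

definition gam :: "real \<Rightarrow> (real \<Rightarrow> complex) \<Rightarrow> (real \<Rightarrow> complex) \<Rightarrow> complex \<Rightarrow> nat \<Rightarrow> nat \<Rightarrow> complex" where
  "gam \<alpha> v1 v2 z j k =
    (let ea = exp (\<i> * of_real \<alpha>); eam = exp (- \<i> * of_real \<alpha>); ez = exp (\<i> * z);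
         b = beta \<alpha> z; E0z = E0 \<alpha> z; E0c = E0 \<alpha> (cnj z);
         E1 = Ev \<alpha> z v1; E2 = Ev \<alpha> z v2 in
     if j = 1 \<and> k = 1 then
       - 2 * \<i> * (1 + 2 * \<i> * b - ip E0z v2 + ip v2 E0c + \<i>/2 * ip E2 v2)
     else if j = 1 then
       - 2 * \<i> * (2 * \<i> * ez * b + ip E0z v1 + eam * ip v2 E0c - \<i>/2 * ip E2 v1)
     else if k = 1 then
       2 * \<i> * (- 2 * \<i> * ea * b + ea * ip E0z v2 + ip v1 E0c + \<i>/2 * ip E1 v2)
     else
       2 * \<i> * (1 - 2 * \<i> * ea * ez * b - ea * ip E0z v1 + eam * ip v1 E0c - \<i>/2 * ip E1 v1))"

definition gdet :: "real \<Rightarrow> (real \<Rightarrow> complex) \<Rightarrow> (real \<Rightarrow> complex) \<Rightarrow> complex \<Rightarrow> complex" where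
  "gdet \<alpha> v1 v2 z = gam \<alpha> v1 v2 z 1 1 * gam \<alpha> v1 v2 z 2 2 - gam \<alpha> v1 v2 z 1 2 * gam \<alpha> v1 v2 z 2 1"

definition res_kernel :: "real \<Rightarrow> (real \<Rightarrow> complex) \<Rightarrow> (real \<Rightarrow> complex) \<Rightarrow> complex \<Rightarrow> real \<Rightarrow> real \<Rightarrow> complex" where
  "res_kernel \<alpha> v1 v2 z x y = gfree \<alpha> z x y - (1 / gdet \<alpha> v1 v2 z) *
     (\<Sum>j\<in>{1,2}. \<Sum>k\<in>{1,2}. calE \<alpha> v1 v2 j z x * gam \<alpha> v1 v2 z j k * cnj (calE \<alpha> v1 v2 k (cnj z) y))"

end

theory Submission
  imports Defs
begin

text \<open>
  For nonreal \<open>z\<close> the resolvent \<open>Ev\<close> of the unperturbed operator \<open>i d/dx\<close> is explicit.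
  Since \<open>A\<close> is \<open>i d/dx\<close> plus a rank-two perturbation, \<open>(A - z) psi = f\<close> is solved by
  \<open>psi = Ev f + c1 calE1 + c2 calE2\<close>, where the coefficients solve a \<open>2 \<times> 2\<close> linear system;
  \<open>Gamma(z)\<close> is, up to the column factors \<open>-2i\<close> and \<open>2i\<close>, the adjugate of its matrix, so
  \<open>gamma(z)\<close> is four times its determinant and Cramer's rule produces the kernel.
  Integration by parts shows that \<open>A\<close> is symmetric, so a nontrivial solution of the
  homogeneous system would be an eigenfunction with nonreal eigenvalue; hence \<open>gamma(z) \<noteq> 0\<close>.
  Symmetry, surjectivity of \<open>A - i\<close> and \<open>A + i\<close> and density of the domain (continuous functions,
  then polynomials, whose boundary condition is repaired by small multiples of \<open>x^n\<close>) give
  self-adjointness. Finally \<open>Gamma(cnj z)\<^sup>* = Gamma(z)\<close> because the free resolvents at \<open>z\<close> and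
  \<open>cnj z\<close> are adjoint to each other.
\<close>

abbreviation lebesgue01 :: "real measure" where
  "lebesgue01 \<equiv> lebesgue_on {0..1}"

section \<open>Square-integrable functions on [0,1]\<close>

lemma continuous_on_Icc_norm_bound:
  fixes h :: "real \<Rightarrow> 'b::real_normed_vector"
  assumes "continuous_on {a..b} h"
  obtains K where "K > 0" "\<And>x. x \<in> {a..b} \<Longrightarrow> norm (h x) \<le> K"
  using compact_imp_bounded[OF compact_continuous_image[OF assms compact_Icc]]
  by (metis bounded_pos imageI)

lemma borel_measurable_cnj [measurable]:
  "f \<in> borel_measurable M \<Longrightarrow> (\<lambda>x. cnj (f x :: complex)) \<in> borel_measurable M"
  by (rule borel_measurable_continuous_on[OF continuous_on_cnj[OF continuous_on_id]])

lemma borel_measurable_lebesgue_on_Icc_id [measurable]: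
  "(\<lambda>x::real. x) \<in> borel_measurable (lebesgue_on {a..b})"
  by (rule continuous_imp_measurable_on_sets_lebesgue) simp_all

lemma continuous_imp_measurable_on_Icc:
  fixes f :: "real \<Rightarrow> 'b::euclidean_space"
  shows "continuous_on {a..b} f \<Longrightarrow> f \<in> borel_measurable (lebesgue_on {a..b})"
  by (rule continuous_imp_measurable_on_sets_lebesgue) auto

lemma L2_measurable: "L2 f \<Longrightarrow> f \<in> borel_measurable lebesgue01"
  by (simp add: L2_def)

lemma L2_integrable_square: "L2 f \<Longrightarrow> integrable lebesgue01 (\<lambda>x. (cmod (f x))^2)"
  by (simp add: L2_def)

lemma L2_integrable:
  assumes "L2 f" shows "integrable lebesgue01 f"
proof -
  interpret finite_measure lebesgue01
    by (rule finite_measure_lebesgue_on) simp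
  have [measurable]: "f \<in> borel_measurable lebesgue01" using assms by (rule L2_measurable)
  have "integrable lebesgue01 (\<lambda>x. cmod (f x))"
    by (rule square_integrable_imp_integrable) (use assms L2_integrable_square in auto)
  then show ?thesis by (simp add: integrable_norm_iff)
qed

lemma L2_ip_integrable:
  assumes "L2 f" "L2 g" shows "integrable lebesgue01 (\<lambda>x. f x * cnj (g x))"
proof (rule measurable_bounded_by_integrable_imp_lebesgue_integrable)
  have [measurable]: "f \<in> borel_measurable lebesgue01" "g \<in> borel_measurable lebesgue01"
    using assms by (auto simp: L2_def)
  show "(\<lambda>x. f x * cnj (g x)) \<in> borel_measurable lebesgue01" by measurable
  show "integrable lebesgue01 (\<lambda>x. (cmod (f x))^2 + (cmod (g x))^2)"
    using assms by (intro Bochner_Integration.integrable_add) (auto simp: L2_def)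
  fix x
  have "2 * cmod (f x) * cmod (g x) \<le> (cmod (f x))^2 + (cmod (g x))^2"
    by (rule sum_squares_bound)
  moreover have "0 \<le> cmod (f x) * cmod (g x)" by simp
  ultimately show "norm (f x * cnj (g x)) \<le> (cmod (f x))^2 + (cmod (g x))^2"
    by (simp only: norm_mult complex_mod_cnj)
qed simp

lemma continuous_imp_L2: "continuous_on {0..1} f \<Longrightarrow> L2 f"
  unfolding L2_def
  by (simp add: continuous_imp_measurable_on_Icc continuous_imp_integrable_real continuous_on_norm
      continuous_on_power)

lemma L2_bounded:
  assumes "f \<in> borel_measurable lebesgue01" "\<And>x. x \<in> {0..1} \<Longrightarrow> cmod (f x) \<le> K"
  shows "L2 f"
  unfolding L2_def
proof
  show "f \<in> borel_measurable lebesgue01" by fact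
  show "integrable lebesgue01 (\<lambda>x. (cmod (f x))^2)"
  proof (rule measurable_bounded_by_integrable_imp_lebesgue_integrable)
    show "(\<lambda>x. (cmod (f x))^2) \<in> borel_measurable lebesgue01" using assms(1) by measurable
    show "integrable lebesgue01 (\<lambda>x. K^2)" by simp
    fix x :: real assume "x \<in> {0..1}"
    then show "norm ((cmod (f x))^2) \<le> K^2" using assms(2) by (simp add: power_mono)
  qed simp
qed

lemma integrable_mult_continuous:
  fixes f h :: "real \<Rightarrow> complex"
  assumes "integrable (lebesgue_on {a..b}) f" "continuous_on {a..b} h"
  shows "integrable (lebesgue_on {a..b}) (\<lambda>x. h x * f x)"
proof -
  obtain K where K: "\<And>x. x \<in> {a..b} \<Longrightarrow> norm (h x) \<le> K"
    using continuous_on_Icc_norm_bound[OF assms(2)] by blast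
  have [measurable]: "f \<in> borel_measurable (lebesgue_on {a..b})" "h \<in> borel_measurable (lebesgue_on {a..b})"
    using assms continuous_imp_measurable_on_Icc by auto
  show ?thesis
  proof (rule measurable_bounded_by_integrable_imp_lebesgue_integrable)
    show "(\<lambda>x. h x * f x) \<in> borel_measurable (lebesgue_on {a..b})" by measurable
    show "integrable (lebesgue_on {a..b}) (\<lambda>x. K * norm (f x))"
      using assms(1) by auto
    fix x assume "x \<in> {a..b}"
    then show "norm (h x * f x) \<le> K * norm (f x)"
      by (simp add: norm_mult K mult_right_mono)
  qed simp
qed

lemma L2_add: assumes "L2 f" "L2 g" shows "L2 (\<lambda>x. f x + g x)"
  unfolding L2_def
proof
  have [measurable]: "f \<in> borel_measurable lebesgue01" "g \<in> borel_measurable lebesgue01"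
    using assms by (auto simp: L2_def)
  show "(\<lambda>x. f x + g x) \<in> borel_measurable lebesgue01" by measurable
  show "integrable lebesgue01 (\<lambda>x. (cmod (f x + g x))^2)"
  proof (rule measurable_bounded_by_integrable_imp_lebesgue_integrable)
    show "(\<lambda>x. (cmod (f x + g x))^2) \<in> borel_measurable lebesgue01" by measurable
    show "integrable lebesgue01 (\<lambda>x. 2 * (cmod (f x))^2 + 2 * (cmod (g x))^2)"
      using assms by (auto simp: L2_def)
    fix x
    have "(cmod (f x + g x))^2 \<le> (cmod (f x) + cmod (g x))^2"
      by (simp add: power_mono norm_triangle_ineq)
    also have "\<dots> \<le> 2 * (cmod (f x))^2 + 2 * (cmod (g x))^2"
      using sum_squares_bound[of "cmod (f x)" "cmod (g x)"] by (simp add: power2_sum)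
    finally show "norm ((cmod (f x + g x))^2) \<le> 2 * (cmod (f x))^2 + 2 * (cmod (g x))^2"
      by simp
  qed simp
qed

lemma L2_mult_continuous:
  assumes "L2 f" "continuous_on {0..1} h" shows "L2 (\<lambda>x. h x * f x)"
proof -
  obtain K where K: "\<And>x. x \<in> {0..1} \<Longrightarrow> norm (h x) \<le> K"
    using continuous_on_Icc_norm_bound[OF assms(2)] by blast
  have [measurable]: "f \<in> borel_measurable lebesgue01" "h \<in> borel_measurable lebesgue01"
    using assms continuous_imp_measurable_on_Icc by (auto simp: L2_def)
  show ?thesis
    unfolding L2_def
  proof
    show "(\<lambda>x. h x * f x) \<in> borel_measurable lebesgue01" by measurable
    show "integrable lebesgue01 (\<lambda>x. (cmod (h x * f x))^2)"
    proof (rule measurable_bounded_by_integrable_imp_lebesgue_integrable)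
      show "(\<lambda>x. (cmod (h x * f x))^2) \<in> borel_measurable lebesgue01" by measurable
      show "integrable lebesgue01 (\<lambda>x. K^2 * (cmod (f x))^2)"
        using assms by (auto simp: L2_def)
      fix x :: real assume x: "x \<in> {0..1}"
      have "(cmod (h x * f x))^2 = (cmod (h x))^2 * (cmod (f x))^2"
        by (simp add: norm_mult power_mult_distrib)
      also have "\<dots> \<le> K^2 * (cmod (f x))^2"
        by (intro mult_right_mono power_mono K x) auto
      finally show "norm ((cmod (h x * f x))^2) \<le> K^2 * (cmod (f x))^2" by simp
    qed simp
  qed
qed

lemma L2_mult_continuous': "L2 f \<Longrightarrow> continuous_on {0..1} h \<Longrightarrow> L2 (\<lambda>x. f x * h x)"
  using L2_mult_continuous[of f h] by (simp add: mult.commute)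

lemma L2_cmult: "L2 f \<Longrightarrow> L2 (\<lambda>x. c * f x)"
  using L2_mult_continuous[of f "\<lambda>_. c"] by simp

lemma L2_diff: "L2 f \<Longrightarrow> L2 g \<Longrightarrow> L2 (\<lambda>x. f x - g x)"
  using L2_add[of f "\<lambda>x. (-1) * g x"] L2_cmult[of g "-1"] by simp

lemma L2_cnj: "L2 f \<Longrightarrow> L2 (\<lambda>x. cnj (f x))"
  unfolding L2_def by auto

lemma L2_zero: "L2 (\<lambda>x. 0)"
  by (rule continuous_imp_L2) simp

lemma L2_cong: assumes "L2 f" "\<And>x. x \<in> {0..1} \<Longrightarrow> g x = f x" shows "L2 g"
proof -
  have "g \<in> borel_measurable lebesgue01 \<longleftrightarrow> f \<in> borel_measurable lebesgue01"
    by (rule measurable_cong) (simp add: assms(2))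
  moreover have "integrable lebesgue01 (\<lambda>x. (cmod (g x))^2) \<longleftrightarrow> integrable lebesgue01 (\<lambda>x. (cmod (f x))^2)"
    by (rule Bochner_Integration.integrable_cong) (simp_all add: assms(2))
  ultimately show ?thesis using assms(1) by (simp add: L2_def)
qed

lemma ip_cnj: "ip g f = cnj (ip f g)"
  unfolding ip_def by (subst Bochner_Integration.integral_cnj[symmetric]) (simp add: mult.commute)

lemma ip_add_left: "L2 f1 \<Longrightarrow> L2 f2 \<Longrightarrow> L2 g \<Longrightarrow> ip (\<lambda>x. f1 x + f2 x) g = ip f1 g + ip f2 g"
  unfolding ip_def by (simp add: distrib_right L2_ip_integrable)

lemma ip_add_right: "L2 f \<Longrightarrow> L2 g1 \<Longrightarrow> L2 g2 \<Longrightarrow> ip f (\<lambda>x. g1 x + g2 x) = ip f g1 + ip f g2"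
  unfolding ip_def by (simp add: distrib_left L2_ip_integrable)

lemma ip_diff_left: "L2 f1 \<Longrightarrow> L2 f2 \<Longrightarrow> L2 g \<Longrightarrow> ip (\<lambda>x. f1 x - f2 x) g = ip f1 g - ip f2 g"
  unfolding ip_def by (simp add: left_diff_distrib L2_ip_integrable)

lemma ip_diff_right: "L2 f \<Longrightarrow> L2 g1 \<Longrightarrow> L2 g2 \<Longrightarrow> ip f (\<lambda>x. g1 x - g2 x) = ip f g1 - ip f g2"
  unfolding ip_def by (simp add: right_diff_distrib L2_ip_integrable)

lemma ip_cmult_left: "ip (\<lambda>x. c * f x) g = c * ip f g"
  unfolding ip_def by (simp add: mult.assoc)

lemma ip_cmult_right: "ip f (\<lambda>x. c * g x) = cnj c * ip f g"
  unfolding ip_def by (simp add: mult.assoc mult.left_commute)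

lemma ip_zero_left: "ip (\<lambda>x. 0) v = 0"
  unfolding ip_def by simp

lemma ip_cong_left: "(\<And>x. x \<in> {0..1} \<Longrightarrow> f x = f' x) \<Longrightarrow> ip f g = ip f' g"
  unfolding ip_def by (rule Bochner_Integration.integral_cong) auto

lemma ip_ae_left: assumes "L2 f" "L2 f'" "L2 g" "ae_eq f f'" shows "ip f g = ip f' g"
  unfolding ip_def
proof (rule integral_cong_AE)
  show "(\<lambda>x. f x * cnj (g x)) \<in> borel_measurable lebesgue01"
    "(\<lambda>x. f' x * cnj (g x)) \<in> borel_measurable lebesgue01"
    using assms by (auto intro: borel_measurable_integrable L2_ip_integrable)
  show "AE x in lebesgue01. f x * cnj (g x) = f' x * cnj (g x)"
    using assms(4) unfolding ae_eq_def by auto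
qed

lemma ip_ae_right: "L2 f \<Longrightarrow> L2 g \<Longrightarrow> L2 g' \<Longrightarrow> ae_eq g g' \<Longrightarrow> ip f g = ip f g'"
  using ip_ae_left ip_cnj by metis

lemma ip_self: "ip f f = of_real (LINT x|lebesgue01. (cmod (f x))^2)"
proof -
  have "ip f f = (LINT x|lebesgue01. of_real ((cmod (f x))^2))"
    unfolding ip_def
    by (rule Bochner_Integration.integral_cong)
      (simp_all add: complex_norm_square[symmetric] del: of_real_power)
  also have "\<dots> = of_real (LINT x|lebesgue01. (cmod (f x))^2)"
    by (rule integral_complex_of_real)
  finally show ?thesis .
qed

lemma ip_self_eq_0_imp_ae_zero:
  assumes "L2 r" "ip r r = 0" shows "ae_eq r (\<lambda>x. 0)"
proof -
  have "(LINT x|lebesgue01. (cmod (r x))^2) = 0" using assms(2) ip_self[of r] by simp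
  then have "AE x in lebesgue01. (cmod (r x))^2 = 0"
    using integral_nonneg_eq_0_iff_AE[of lebesgue01 "\<lambda>x. (cmod (r x))^2"] assms(1)
    by (simp add: L2_def)
  then show ?thesis unfolding ae_eq_def by simp
qed

lemma ip_self_eq_0_imp_zero:
  assumes "continuous_on {0..1} f" "ip f f = 0" "x \<in> {0..1}"
  shows "f x = 0"
proof -
  have "(LINT x|lebesgue01. (cmod (f x))^2) = 0" using assms(2) ip_self[of f] by simp
  moreover have "continuous_on {0..1} (\<lambda>x. (cmod (f x))^2)" by (intro continuous_intros assms(1))
  ultimately show ?thesis
    using integralL_eq_0_iff[of 0 1 "\<lambda>x. (cmod (f x))^2"] assms(3) by simp
qed

lemma ae_eq_sym: "ae_eq f g \<Longrightarrow> ae_eq g f"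
  unfolding ae_eq_def by auto

lemma ae_eq_trans: "ae_eq f g \<Longrightarrow> ae_eq g h \<Longrightarrow> ae_eq f h"
  unfolding ae_eq_def by (rule AE_mp) (rule AE_mp, assumption, auto)

section \<open>Absolutely continuous functions\<close>

lemma AE_lebesgue_on_Icc_not_in_negligible:
  assumes "negligible N" shows "AE t in lebesgue_on {a..b::real}. t \<notin> N"
proof -
  have "N \<in> null_sets lebesgue"
    using negligible_iff_null_sets[of N] assms negligible_imp_sets by auto
  then have "AE t in lebesgue. t \<notin> N" by (rule AE_not_in)
  then show ?thesis
    by (subst AE_restrict_space_iff) auto
qed

lemma AE_lebesgue_on_Icc_neq: "AE t in lebesgue_on {a..b::real}. t \<noteq> s"
  using AE_lebesgue_on_Icc_not_in_negligible[of "{s}"] by simp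

lemma integral_lebesgue_on_singleton: "(LINT t|lebesgue_on {a..a::real}. (h t :: complex)) = 0"
proof (rule integral_eq_zero_AE)
  show "AE t in lebesgue_on {a..a}. h t = 0"
    using AE_lebesgue_on_Icc_neq[of a a a] by (rule AE_mp) (rule AE_I2, auto)
qed

lemma integral_subinterval_if:
  fixes h :: "real \<Rightarrow> complex"
  assumes "x \<in> {a..b::real}"
  shows "(LINT t|lebesgue_on {a..x}. h t) = (LINT t|lebesgue_on {a..b}. (if t \<in> {a..x} then h t else 0))"
proof -
  have Int: "{a..x} \<inter> {a..b} = {a..x}" using assms by auto
  have "(LINT t|lebesgue_on {a..b}. (if t \<in> {a..x} then h t else 0))
      = (LINT t|lebesgue_on ({a..x} \<inter> {a..b}). h t)"
    by (rule Lebesgue_Measure.integral_restrict_Int) auto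
  then show ?thesis unfolding Int by simp
qed

lemma L2_integrable_on_subinterval: "L2 f \<Longrightarrow> x \<in> {0..1} \<Longrightarrow> integrable (lebesgue_on {0..x}) f"
  using L2_integrable integrable_subinterval[of 0 1 f 0 x] by auto

lemma W21D: "W21 psi phi \<Longrightarrow> x \<in> {0..1} \<Longrightarrow> psi x = psi 0 + (LINT t|lebesgue_on {0..x}. phi t)"
  unfolding W21_def by blast

lemma W21_L2_derivative: "W21 psi phi \<Longrightarrow> L2 phi"
  unfolding W21_def by blast

lemma W21I:
  "L2 phi \<Longrightarrow> (\<And>x. x \<in> {0..1} \<Longrightarrow> psi x = psi 0 + (LINT t|lebesgue_on {0..x}. phi t)) \<Longrightarrow> W21 psi phi"
  unfolding W21_def by blast

lemma W21_continuous: assumes "W21 psi phi" shows "continuous_on {0..1} psi"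
proof -
  have "continuous_on {0..1} (\<lambda>x. psi 0 + (LINT t|lebesgue_on {0..x}. phi t))"
    using assms
    by (intro continuous_intros indefinite_integral_continuous_real L2_integrable W21_L2_derivative)
  moreover have "continuous_on {0..1} psi
      \<longleftrightarrow> continuous_on {0..1} (\<lambda>x. psi 0 + (LINT t|lebesgue_on {0..x}. phi t))"
    by (rule continuous_on_cong[OF refl]) (rule W21D[OF assms])
  ultimately show ?thesis by blast
qed

lemma W21_L2: "W21 psi phi \<Longrightarrow> L2 psi"
  by (rule continuous_imp_L2, rule W21_continuous)

lemma W21_cong:
  assumes "W21 psi phi" "\<And>x. x \<in> {0..1} \<Longrightarrow> psi' x = psi x" "\<And>x. x \<in> {0..1} \<Longrightarrow> phi' x = phi x"
  shows "W21 psi' phi'"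
proof (rule W21I)
  show "L2 phi'" using L2_cong[OF W21_L2_derivative[OF assms(1)]] assms(3) by blast
  fix x :: real assume x: "x \<in> {0..1}"
  have "(LINT t|lebesgue_on {0..x}. phi' t) = (LINT t|lebesgue_on {0..x}. phi t)"
    using x by (intro Bochner_Integration.integral_cong) (auto simp: assms(3))
  then show "psi' x = psi' 0 + (LINT t|lebesgue_on {0..x}. phi' t)"
    using W21D[OF assms(1) x] assms(2)[of 0] assms(2)[OF x] by simp
qed

lemma W21_add:
  assumes "W21 F a" "W21 G b"
  shows "W21 (\<lambda>x. F x + G x) (\<lambda>x. a x + b x)"
proof (rule W21I)
  show "L2 (\<lambda>x. a x + b x)" using assms by (intro L2_add W21_L2_derivative)
  fix x :: real assume x: "x \<in> {0..1}"
  have "(LINT t|lebesgue_on {0..x}. a t + b t)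
      = (LINT t|lebesgue_on {0..x}. a t) + (LINT t|lebesgue_on {0..x}. b t)"
    using assms x by (intro Bochner_Integration.integral_add L2_integrable_on_subinterval W21_L2_derivative)
  then show "F x + G x = F 0 + G 0 + (LINT t|lebesgue_on {0..x}. a t + b t)"
    using W21D[OF assms(1) x] W21D[OF assms(2) x] by simp
qed

lemma W21_cmult:
  assumes "W21 F a"
  shows "W21 (\<lambda>x. c * F x) (\<lambda>x. c * a x)"
proof (rule W21I)
  show "L2 (\<lambda>x. c * a x)" using assms by (intro L2_cmult W21_L2_derivative)
  fix x :: real assume x: "x \<in> {0..1}"
  show "c * F x = c * F 0 + (LINT t|lebesgue_on {0..x}. c * a t)"
    using W21D[OF assms x] by (simp add: distrib_left)
qed

lemma W21_const: "W21 (\<lambda>x. c) (\<lambda>x. 0)"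
  by (rule W21I) (simp_all add: L2_zero)

lemma W21_primitive: "L2 h \<Longrightarrow> W21 (\<lambda>x. LINT t|lebesgue_on {0..x}. h t) h"
  using integral_lebesgue_on_singleton[of 0 h] by (intro W21I) simp_all

lemma W21_if_has_vector_derivative:
  assumes der: "\<And>x. x \<in> {0..1} \<Longrightarrow> (F has_vector_derivative F' x) (at x within {0..1})"
    and cont: "continuous_on {0..1} F'"
  shows "W21 F F'"
proof (rule W21I)
  show "L2 F'" using cont by (rule continuous_imp_L2)
  fix x :: real assume x: "x \<in> {0..1}"
  have "(F' has_integral (F x - F 0)) {0..x}"
    using x by (intro fundamental_theorem_of_calculus)
      (auto intro: has_vector_derivative_within_subset[OF der])
  moreover have "integrable (lebesgue_on {0..x}) F'"
    using x by (intro continuous_imp_integrable_real continuous_on_subset[OF cont]) auto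
  ultimately have "(LINT t|lebesgue_on {0..x}. F' t) = F x - F 0"
    by (simp add: lebesgue_integral_eq_integral integral_unique)
  then show "F x = F 0 + (LINT t|lebesgue_on {0..x}. F' t)" by simp
qed

lemma integral_tail:
  fixes b :: "real \<Rightarrow> complex"
  assumes b: "integrable (lebesgue_on {0..c}) b" and s: "s \<in> {0..c}"
  shows "(LINT t|lebesgue_on {0..c}. (if s \<le> t then b t else 0))
    = (LINT t|lebesgue_on {0..c}. b t) - (LINT t|lebesgue_on {0..s}. b t)"
proof -
  have [measurable]: "b \<in> borel_measurable (lebesgue_on {0..c})" using b by auto
  have i: "integrable (lebesgue_on {0..c}) (\<lambda>t. if s \<le> t then b t else 0)"
    "integrable (lebesgue_on {0..c}) (\<lambda>t. if t \<in> {0..s} then b t else 0)"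
    by (auto intro: Bochner_Integration.integrable_bound[OF b])
  have "(LINT t|lebesgue_on {0..c}. (if s \<le> t then b t else 0) + (if t \<in> {0..s} then b t else 0))
      = (LINT t|lebesgue_on {0..c}. b t)"
  proof (rule integral_cong_AE)
    show "AE t in lebesgue_on {0..c}. (if s \<le> t then b t else 0) + (if t \<in> {0..s} then b t else 0) = b t"
      using AE_lebesgue_on_Icc_neq[of s 0 c] by (rule AE_mp) (rule AE_I2, auto)
  qed measurable
  then show ?thesis
    unfolding Bochner_Integration.integral_add[OF i] integral_subinterval_if[OF s] by (simp add: algebra_simps)
qed

lemma integrable_triangle_product:
  fixes a b :: "real \<Rightarrow> complex"
  assumes a: "integrable (lebesgue_on {0..c}) a" and b: "integrable (lebesgue_on {0..c}) b"
  shows "integrable (lebesgue_on {0..c} \<Otimes>\<^sub>M lebesgue_on {0..c}) (\<lambda>(s, t). if s \<le> t then a s * b t else 0)"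
proof (rule Bochner_Integration.integrable_bound)
  interpret finite_measure "lebesgue_on {0..c}" by (rule finite_measure_lebesgue_on) simp
  interpret pair_sigma_finite "lebesgue_on {0..c}" "lebesgue_on {0..c}" by unfold_locales
  have [measurable]: "a \<in> borel_measurable (lebesgue_on {0..c})" "b \<in> borel_measurable (lebesgue_on {0..c})"
    using a b by auto
  show "integrable (lebesgue_on {0..c} \<Otimes>\<^sub>M lebesgue_on {0..c}) (\<lambda>p. a (fst p) * b (snd p))"
    by (rule Fubini_integrable) (auto simp: norm_mult a b)
  show "(\<lambda>(s, t). if s \<le> t then a s * b t else 0) \<in> borel_measurable (lebesgue_on {0..c} \<Otimes>\<^sub>M lebesgue_on {0..c})"
    by measurable
qed auto

text \<open>Fubini on the triangle \<open>s \<le> t\<close>.\<close>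

lemma integral_primitive_product:
  fixes a b :: "real \<Rightarrow> complex"
  assumes ia: "integrable (lebesgue_on {0..c}) a" and ib: "integrable (lebesgue_on {0..c}) b"
  shows "(LINT s|lebesgue_on {0..c}. a s * (LINT t|lebesgue_on {0..s}. b t) + (LINT t|lebesgue_on {0..s}. a t) * b s)
       = (LINT t|lebesgue_on {0..c}. a t) * (LINT t|lebesgue_on {0..c}. b t)"
proof -
  define N where "N = lebesgue_on {0..c}"
  define A where "A s = (LINT t|lebesgue_on {0..s}. a t)" for s
  define B where "B s = (LINT t|lebesgue_on {0..s}. b t)" for s
  define P where "P s t = (if s \<le> t then a s * b t else 0)" for s t
  interpret N: finite_measure N unfolding N_def by (rule finite_measure_lebesgue_on) simp
  interpret NN: pair_sigma_finite N N by unfold_locales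
  have ia': "integrable N a" using ia by (simp add: N_def)
  have [measurable]: "a \<in> borel_measurable N" "b \<in> borel_measurable N" "(\<lambda>x::real. x) \<in> borel_measurable N"
    using ia ib by (auto simp: N_def)
  have spN: "space N = {0..c}" by (simp add: N_def)
  have iBa: "integrable N (\<lambda>s. B s * a s)" and iAb: "integrable N (\<lambda>s. A s * b s)"
    unfolding N_def A_def B_def
    by (intro integrable_mult_continuous indefinite_integral_continuous_real ia ib)+
  have inner_t: "A t * b t = (LINT s|N. P s t)" if "t \<in> {0..c}" for t
  proof -
    have "A t * b t = (LINT s|N. (if s \<in> {0..t} then a s else 0) * b t)"
      unfolding A_def N_def integral_subinterval_if[OF that] by simp
    also have "\<dots> = (LINT s|N. P s t)"
      by (rule Bochner_Integration.integral_cong) (auto simp: P_def spN)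
    finally show ?thesis .
  qed
  have inner_s: "(LINT t|N. P s t) = a s * (B c - B s)" if "s \<in> {0..c}" for s
  proof -
    have "(LINT t|N. P s t) = (LINT t|N. a s * (if s \<le> t then b t else 0))"
      by (rule Bochner_Integration.integral_cong) (auto simp: P_def)
    then show ?thesis using integral_tail[OF ib that] unfolding N_def B_def by simp
  qed
  have iP: "integrable (N \<Otimes>\<^sub>M N) (case_prod P)"
    unfolding N_def P_def by (rule integrable_triangle_product[OF ia ib])
  have "(LINT t|N. A t * b t) = (LINT t|N. (LINT s|N. P s t))"
    by (rule Bochner_Integration.integral_cong) (auto simp: spN inner_t)
  also have "\<dots> = (LINT s|N. (LINT t|N. P s t))"
    by (rule NN.Fubini_integral[OF iP])
  also have "\<dots> = (LINT s|N. a s * B c - B s * a s)"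
    by (rule Bochner_Integration.integral_cong) (auto simp: spN inner_s algebra_simps)
  also have "\<dots> = A c * B c - (LINT s|N. B s * a s)"
    using ia' iBa by (simp add: A_def N_def mult.commute)
  finally have "(LINT s|N. a s * B s + A s * b s) = A c * B c"
    using iBa iAb by (simp add: mult.commute)
  then show ?thesis unfolding A_def B_def N_def .
qed

lemma W21_mult:
  assumes F: "W21 F a" and G: "W21 G b"
  shows "W21 (\<lambda>x. F x * G x) (\<lambda>x. a x * G x + F x * b x)"
proof (rule W21I)
  show "L2 (\<lambda>x. a x * G x + F x * b x)"
    using F G by (intro L2_add L2_mult_continuous' L2_mult_continuous W21_L2_derivative W21_continuous)
  fix x :: real assume x: "x \<in> {0..1}"
  have ia: "integrable (lebesgue_on {0..x}) a" and ib: "integrable (lebesgue_on {0..x}) b"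
    using F G x by (auto intro: L2_integrable_on_subinterval W21_L2_derivative)
  define A where "A s = (LINT t|lebesgue_on {0..s}. a t)" for s
  define B where "B s = (LINT t|lebesgue_on {0..s}. b t)" for s
  have parts: "(LINT s|lebesgue_on {0..x}. a s * B s + A s * b s) = A x * B x"
    unfolding A_def B_def by (rule integral_primitive_product[OF ia ib])
  have iBa: "integrable (lebesgue_on {0..x}) (\<lambda>s. B s * a s)"
    unfolding B_def by (intro integrable_mult_continuous[OF ia] indefinite_integral_continuous_real[OF ib])
  have iAb: "integrable (lebesgue_on {0..x}) (\<lambda>s. A s * b s)"
    unfolding A_def by (intro integrable_mult_continuous[OF ib] indefinite_integral_continuous_real[OF ia])
  have "(LINT s|lebesgue_on {0..x}. a s * G s + F s * b s)
      = (LINT s|lebesgue_on {0..x}. (G 0 * a s + F 0 * b s) + (B s * a s + A s * b s))"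
  proof (rule Bochner_Integration.integral_cong[OF refl])
    fix s assume "s \<in> space (lebesgue_on {0..x})"
    then have s: "s \<in> {0..1}" using x by auto
    show "a s * G s + F s * b s = (G 0 * a s + F 0 * b s) + (B s * a s + A s * b s)"
      using W21D[OF F s] W21D[OF G s] unfolding A_def B_def by (simp add: algebra_simps)
  qed
  also have "\<dots> = G 0 * A x + F 0 * B x + A x * B x"
    using ia ib iBa iAb parts by (simp add: A_def B_def mult.commute)
  finally show "F x * G x = F 0 * G 0 + (LINT t|lebesgue_on {0..x}. a t * G t + F t * b t)"
    using W21D[OF F x] W21D[OF G x] unfolding A_def B_def by (simp add: algebra_simps)
qed

lemma W21_cnj: assumes "W21 F a" shows "W21 (\<lambda>x. cnj (F x)) (\<lambda>x. cnj (a x))"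
proof (rule W21I)
  show "L2 (\<lambda>x. cnj (a x))" using assms by (intro L2_cnj W21_L2_derivative)
  show "cnj (F x) = cnj (F 0) + (LINT t|lebesgue_on {0..x}. cnj (a t))" if "x \<in> {0..1}" for x
    using W21D[OF assms that] by simp
qed

lemma W21_integration_by_parts:
  assumes "W21 F a" "W21 G b"
  shows "ip a G + ip F b = F 1 * cnj (G 1) - F 0 * cnj (G 0)"
proof -
  have "L2 a" "L2 b" "L2 F" "L2 G" using assms by (auto intro: W21_L2 W21_L2_derivative)
  then show ?thesis
    using W21D[OF W21_mult[OF assms(1) W21_cnj[OF assms(2)]], of 1]
    by (simp add: ip_def L2_ip_integrable)
qed

section \<open>A criterion for self-adjointness\<close>

lemma ae_zero_if_orthogonal_to_range:
  fixes G :: "((real \<Rightarrow> complex) \<times> (real \<Rightarrow> complex)) set" and z :: complex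
  assumes L2: "\<And>psi g. (psi, g) \<in> G \<Longrightarrow> L2 psi \<and> L2 g"
    and onto: "\<And>f. L2 f \<Longrightarrow> \<exists>(psi, g)\<in>G. ae_eq g (\<lambda>x. z * psi x + f x)"
    and r: "L2 r" and orth: "\<And>psi g. (psi, g) \<in> G \<Longrightarrow> ip g r = z * ip psi r"
  shows "ae_eq r (\<lambda>x. 0)"
proof -
  obtain psi g where pg: "(psi, g) \<in> G" and g: "ae_eq g (\<lambda>x. z * psi x + r x)"
    using onto[OF r] by blast
  have psi: "L2 psi" and "L2 g" using L2[OF pg] by auto
  then have "ip g r = ip (\<lambda>x. z * psi x + r x) r"
    using r g by (intro ip_ae_left) (auto intro: L2_add L2_cmult)
  also have "\<dots> = z * ip psi r + ip r r"
    using psi r by (simp add: ip_add_left ip_cmult_left L2_cmult)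
  finally have "ip r r = 0" using orth[OF pg] by simp
  then show ?thesis by (rule ip_self_eq_0_imp_ae_zero[OF r])
qed

text \<open>Solve \<open>(A - cnj z) chi = w - cnj z u\<close>; then \<open>u - chi\<close> is orthogonal to the
  range of \<open>A - z\<close>, which is everything.\<close>

lemma adjoint_pair_in_graph:
  fixes G :: "((real \<Rightarrow> complex) \<times> (real \<Rightarrow> complex)) set" and z :: complex
  assumes sym: "\<And>psi g chi h. (psi, g) \<in> G \<Longrightarrow> (chi, h) \<in> G \<Longrightarrow> ip g chi = ip psi h"
    and L2: "\<And>psi g. (psi, g) \<in> G \<Longrightarrow> L2 psi \<and> L2 g"
    and onto: "\<And>f. L2 f \<Longrightarrow> \<exists>(psi, g)\<in>G. ae_eq g (\<lambda>x. z * psi x + f x)"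
    and onto_cnj: "\<And>f. L2 f \<Longrightarrow> \<exists>(psi, g)\<in>G. ae_eq g (\<lambda>x. cnj z * psi x + f x)"
    and u: "L2 u" and w: "L2 w" and adj: "\<forall>(psi, g)\<in>G. ip g u = ip psi w"
  shows "\<exists>(psi, g)\<in>G. ae_eq u psi \<and> ae_eq w g"
proof -
  have f: "L2 (\<lambda>x. w x - cnj z * u x)" using u w by (intro L2_diff L2_cmult)
  obtain chi h where ch: "(chi, h) \<in> G" and h_ae: "ae_eq h (\<lambda>x. cnj z * chi x + (w x - cnj z * u x))"
    using onto_cnj[OF f] by blast
  have chi: "L2 chi" and h: "L2 h" using L2[OF ch] by auto
  define r where "r x = u x - chi x" for x
  have r: "L2 r" unfolding r_def using u chi by (rule L2_diff)
  have orth: "ip g r = z * ip psi r" if pg: "(psi, g) \<in> G" for psi g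
  proof -
    have psi: "L2 psi" and g: "L2 g" using L2[OF pg] by auto
    have "ip psi h = ip psi (\<lambda>x. cnj z * chi x + (w x - cnj z * u x))"
      using psi h h_ae L2_add[OF L2_cmult[OF chi] f] by (intro ip_ae_right) auto
    also have "\<dots> = z * ip psi chi + (ip psi w - z * ip psi u)"
      using psi chi u w by (simp add: ip_add_right ip_diff_right ip_cmult_right L2_cmult L2_diff)
    finally have ph: "ip psi h = z * ip psi chi + (ip psi w - z * ip psi u)" .
    have "ip g r = ip g u - ip g chi" unfolding r_def using g u chi by (rule ip_diff_right)
    also have "ip g u = ip psi w" using adj pg by auto
    also have "ip g chi = ip psi h" by (rule sym[OF pg ch])
    finally have "ip g r = z * ip psi u - z * ip psi chi" using ph by simp
    also have "\<dots> = z * ip psi r"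
      unfolding r_def using psi u chi by (simp add: ip_diff_right right_diff_distrib)
    finally show ?thesis .
  qed
  have r0: "ae_eq r (\<lambda>x. 0)"
    using ae_zero_if_orthogonal_to_range[of G z r] L2 onto r orth by blast
  then have "ae_eq u chi" unfolding ae_eq_def r_def by auto
  moreover have "ae_eq w (\<lambda>x. cnj z * chi x + (w x - cnj z * u x))"
    using r0 unfolding ae_eq_def r_def by (rule AE_mp) (auto simp: algebra_simps)
  then have "ae_eq w h" using ae_eq_sym[OF h_ae] by (rule ae_eq_trans)
  ultimately show ?thesis using ch by blast
qed

lemma self_adjoint_graphI:
  fixes G :: "((real \<Rightarrow> complex) \<times> (real \<Rightarrow> complex)) set" and z :: complex
  assumes sym: "\<And>psi g chi h. (psi, g) \<in> G \<Longrightarrow> (chi, h) \<in> G \<Longrightarrow> ip g chi = ip psi h"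
    and L2: "\<And>psi g. (psi, g) \<in> G \<Longrightarrow> L2 psi \<and> L2 g"
    and onto: "\<And>f. L2 f \<Longrightarrow> \<exists>(psi, g)\<in>G. ae_eq g (\<lambda>x. z * psi x + f x)"
    and onto_cnj: "\<And>f. L2 f \<Longrightarrow> \<exists>(psi, g)\<in>G. ae_eq g (\<lambda>x. cnj z * psi x + f x)"
    and dense: "\<And>f. L2 f \<Longrightarrow> \<forall>\<epsilon>>0. \<exists>(psi, g)\<in>G. L2norm (\<lambda>x. f x - psi x) < \<epsilon>"
  shows "self_adjoint_graph G"
  unfolding self_adjoint_graph_def
proof (intro conjI allI impI iffI)
  fix f :: "real \<Rightarrow> complex" and \<epsilon> :: real
  assume "L2 f" "\<epsilon> > 0"
  then show "\<exists>(psi, g)\<in>G. L2norm (\<lambda>x. f x - psi x) < \<epsilon>" using dense by blast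
next
  fix u w :: "real \<Rightarrow> complex"
  assume "L2 u \<and> L2 w" "\<forall>(psi, g)\<in>G. ip g u = ip psi w"
  then show "\<exists>(psi, g)\<in>G. ae_eq u psi \<and> ae_eq w g"
    using adjoint_pair_in_graph[OF sym L2 onto onto_cnj] by blast
next
  fix u w :: "real \<Rightarrow> complex"
  assume uw: "L2 u \<and> L2 w" and "\<exists>(psi, g)\<in>G. ae_eq u psi \<and> ae_eq w g"
  then obtain psi g where pg: "(psi, g) \<in> G" and ae: "ae_eq u psi" "ae_eq w g" by blast
  show "\<forall>(chi, h)\<in>G. ip h u = ip chi w"
  proof clarify
    fix chi h assume ch: "(chi, h) \<in> G"
    have "ip h u = ip h psi" using L2[OF ch] L2[OF pg] uw ae(1) by (intro ip_ae_right) auto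
    also have "\<dots> = ip chi g" by (rule sym[OF ch pg])
    also have "\<dots> = ip chi w" using L2[OF ch] L2[OF pg] uw ae_eq_sym[OF ae(2)] by (intro ip_ae_right) auto
    finally show "ip h u = ip chi w" .
  qed
qed

section \<open>Symmetry of the operator\<close>

lemma AgraphE:
  assumes "(psi, g) \<in> Agraph v1 v2 \<alpha>"
  obtains phi where "W21 psi phi"
    "psi 1 + \<i> * ip psi v2 = exp (\<i> * of_real \<alpha>) * (psi 0 - \<i> * ip psi v1)"
    "g = (\<lambda>x. \<i> * phi x + v1 x * (psi 0 - \<i>/2 * ip psi v1) + v2 x * (psi 1 + \<i>/2 * ip psi v2))"
  using assms unfolding Agraph_def by auto

lemma AgraphI:
  assumes "W21 psi phi"
    "psi 1 + \<i> * ip psi v2 = exp (\<i> * of_real \<alpha>) * (psi 0 - \<i> * ip psi v1)"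
    "\<And>x. g x = \<i> * phi x + v1 x * (psi 0 - \<i>/2 * ip psi v1) + v2 x * (psi 1 + \<i>/2 * ip psi v2)"
  shows "(psi, g) \<in> Agraph v1 v2 \<alpha>"
  using assms unfolding Agraph_def by auto

lemma Agraph_L2:
  assumes "L2 v1" "L2 v2" "(psi, g) \<in> Agraph v1 v2 \<alpha>"
  shows "L2 psi \<and> L2 g"
proof -
  obtain phi where W: "W21 psi phi"
    and g: "g = (\<lambda>x. \<i> * phi x + v1 x * (psi 0 - \<i>/2 * ip psi v1) + v2 x * (psi 1 + \<i>/2 * ip psi v2))"
    using AgraphE[OF assms(3)] by blast
  have "L2 g" unfolding g using assms(1,2)
    by (intro L2_add L2_cmult L2_mult_continuous' W21_L2_derivative[OF W]) auto
  then show ?thesis using W21_L2[OF W] by simp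
qed

text \<open>After integration by parts, the boundary terms cancel against the rank-two
  perturbation precisely because of the coupled boundary condition.\<close>

lemma Agraph_symmetric:
  assumes v1: "L2 v1" and v2: "L2 v2"
    and pg: "(psi, g) \<in> Agraph v1 v2 \<alpha>" and ch: "(chi, h) \<in> Agraph v1 v2 \<alpha>"
  shows "ip g chi = ip psi h"
proof -
  define E where "E = exp (\<i> * of_real \<alpha>)"
  have E: "cnj E * E = 1" unfolding E_def by (simp add: exp_cnj exp_add[symmetric])
  obtain phi where W1: "W21 psi phi" and bc1: "psi 1 + \<i> * ip psi v2 = E * (psi 0 - \<i> * ip psi v1)"
    and g: "g = (\<lambda>x. \<i> * phi x + v1 x * (psi 0 - \<i>/2 * ip psi v1) + v2 x * (psi 1 + \<i>/2 * ip psi v2))"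
    using AgraphE[OF pg] unfolding E_def by blast
  obtain phi2 where W2: "W21 chi phi2" and bc2: "chi 1 + \<i> * ip chi v2 = E * (chi 0 - \<i> * ip chi v1)"
    and h: "h = (\<lambda>x. \<i> * phi2 x + v1 x * (chi 0 - \<i>/2 * ip chi v1) + v2 x * (chi 1 + \<i>/2 * ip chi v2))"
    using AgraphE[OF ch] unfolding E_def by blast
  have psi: "L2 psi" "L2 phi" and chi: "L2 chi" "L2 phi2"
    using W1 W2 by (auto intro: W21_L2 W21_L2_derivative)
  define a b c d where "a = ip psi v1" and "b = ip psi v2" and "c = ip chi v1" and "d = ip chi v2"
  define X1 Y1 X2 Y2 where "X1 = psi 0 - \<i>/2 * a" and "Y1 = psi 1 + \<i>/2 * b"
    and "X2 = chi 0 - \<i>/2 * c" and "Y2 = chi 1 + \<i>/2 * d"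
  have lhs: "ip g chi = \<i> * ip phi chi + X1 * cnj c + Y1 * cnj d"
    unfolding g c_def d_def X1_def Y1_def a_def b_def using psi chi v1 v2
    by (simp add: ip_add_left ip_cmult_left L2_add L2_cmult ip_cnj[of v1 chi] ip_cnj[of v2 chi]
        mult.commute[of "v1 _"] mult.commute[of "v2 _"])
  have rhs: "ip psi h = - \<i> * ip psi phi2 + cnj X2 * a + cnj Y2 * b"
    unfolding h a_def b_def X2_def Y2_def c_def d_def using psi chi v1 v2
    by (simp add: ip_add_right ip_cmult_right L2_add L2_cmult
        mult.commute[of "v1 _"] mult.commute[of "v2 _"])
  have parts: "ip phi chi + ip psi phi2 = psi 1 * cnj (chi 1) - psi 0 * cnj (chi 0)"
    by (rule W21_integration_by_parts[OF W1 W2])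
  have bc1': "psi 1 = E * (psi 0 - \<i> * a) - \<i> * b"
    using bc1 unfolding a_def b_def by (simp add: algebra_simps)
  have "chi 1 = E * (chi 0 - \<i> * c) - \<i> * d"
    using bc2 unfolding c_def d_def by (simp add: algebra_simps)
  then have bc2': "cnj (chi 1) = cnj E * (cnj (chi 0) + \<i> * cnj c) + \<i> * cnj d" by simp
  have "ip g chi - ip psi h
      = \<i> * (ip phi chi + ip psi phi2) + X1 * cnj c + Y1 * cnj d - cnj X2 * a - cnj Y2 * b"
    unfolding lhs rhs by (simp add: algebra_simps)
  also have "\<dots> = 0"
    unfolding parts X1_def Y1_def X2_def Y2_def
    using E by (simp add: bc1' bc2' algebra_simps) algebra
  finally show ?thesis by simp
qed

section \<open>The unperturbed resolvent\<close>

definition exp_weighted_primitive :: "complex \<Rightarrow> (real \<Rightarrow> complex) \<Rightarrow> real \<Rightarrow> complex" where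
  "exp_weighted_primitive z h x = (LINT t|lebesgue_on {0..x}. exp (\<i> * z * of_real t) * h t)"

abbreviation exp_weighted_integral :: "complex \<Rightarrow> (real \<Rightarrow> complex) \<Rightarrow> complex" where
  "exp_weighted_integral z h \<equiv> exp_weighted_primitive z h 1"

lemma W21_exp_linear: "W21 (\<lambda>x. exp (c * of_real x)) (\<lambda>x. c * exp (c * of_real x))"
proof (rule W21_if_has_vector_derivative)
  fix x :: real
  have "((\<lambda>u. exp (c * u)) has_field_derivative (c * exp (c * of_real x))) (at (of_real x))"
    by (auto intro!: derivative_eq_intros simp: mult.commute)
  then show "((\<lambda>x. exp (c * of_real x)) has_vector_derivative c * exp (c * of_real x)) (at x within {0..1})"
    by (rule has_vector_derivative_real_field)
qed (intro continuous_intros)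

lemma L2_exp_mult: "L2 h \<Longrightarrow> L2 (\<lambda>t. exp (c * of_real t) * h t)"
  by (erule L2_mult_continuous) (intro continuous_intros)

lemma W21_exp_weighted_primitive:
  "L2 h \<Longrightarrow> W21 (exp_weighted_primitive z h) (\<lambda>t. exp (\<i> * z * of_real t) * h t)"
  unfolding exp_weighted_primitive_def by (rule W21_primitive[OF L2_exp_mult])

lemma exp_weighted_primitive_0: "exp_weighted_primitive z h 0 = 0"
  unfolding exp_weighted_primitive_def by (rule integral_lebesgue_on_singleton)

lemma beta_denominator_nonzero:
  assumes "Im z \<noteq> 0"
  shows "1 - exp (\<i> * of_real \<alpha>) * exp (\<i> * z) \<noteq> 0"
proof
  assume "1 - exp (\<i> * of_real \<alpha>) * exp (\<i> * z) = 0"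
  then have "cmod (exp (\<i> * of_real \<alpha>) * exp (\<i> * z)) = 1" by simp
  moreover have "cmod (exp (\<i> * of_real \<alpha>) * exp (\<i> * z)) = exp (- Im z)"
    by (simp only: norm_mult norm_exp_eq_Re) simp
  ultimately show False using assms by simp
qed

lemma beta_mult_denominator:
  assumes "Im z \<noteq> 0"
  shows "beta \<alpha> z * (1 - exp (\<i> * of_real \<alpha>) * exp (\<i> * z)) = \<i>"
proof -
  define e w where "e = exp (\<i> * of_real \<alpha>)" and "w = exp (\<i> * z)"
  have ne: "1 - e * w \<noteq> 0" using beta_denominator_nonzero[OF assms] unfolding e_def w_def .
  have w0: "w \<noteq> 0" unfolding w_def by simp
  have "exp (- \<i> * z) = inverse w" unfolding w_def by (simp add: exp_minus[symmetric])
  then have "beta \<alpha> z = \<i> * inverse w / (inverse w - e)"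
    unfolding beta_def e_def by simp
  moreover have "inverse w - e \<noteq> 0"
    using ne w0 by (auto simp: field_simps)
  ultimately show ?thesis unfolding e_def[symmetric] w_def[symmetric]
    using ne w0 by (simp add: field_simps)
qed

lemma cnj_beta_cnj:
  assumes z: "Im z \<noteq> 0"
  shows "cnj (beta \<alpha> (cnj z)) = exp (\<i> * of_real \<alpha>) * exp (\<i> * z) * beta \<alpha> z"
proof -
  define e w where "e = exp (\<i> * of_real \<alpha>)" and "w = exp (\<i> * z)"
  define bt where "bt = cnj (beta \<alpha> (cnj z))"
  have ne: "1 - e * w \<noteq> 0" unfolding e_def w_def by (rule beta_denominator_nonzero[OF z])
  have r1: "beta \<alpha> z * (1 - e * w) = \<i>" unfolding e_def w_def by (rule beta_mult_denominator[OF z])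
  have "cnj (beta \<alpha> (cnj z) * (1 - e * exp (\<i> * cnj z))) = - \<i>"
    using beta_mult_denominator[of "cnj z" \<alpha>] z unfolding e_def by simp
  then have r2: "bt * (1 - cnj e * exp (- \<i> * z)) = - \<i>" unfolding bt_def by (simp add: exp_cnj)
  have ee: "e * cnj e = 1" unfolding e_def by (simp add: exp_cnj exp_minus_inverse)
  have ww: "w * exp (- \<i> * z) = 1" unfolding w_def using exp_minus_inverse[of "\<i> * z"] by simp
  have "(1 - cnj e * exp (- \<i> * z)) * (- e * w) = - e * w + (e * cnj e) * (w * exp (- \<i> * z))"
    by (simp add: algebra_simps)
  also have "\<dots> = 1 - e * w" using ee ww by simp
  finally have "bt * (1 - e * w) = bt * (1 - cnj e * exp (- \<i> * z)) * (- e * w)"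
    by (simp only: mult.assoc)
  also have "\<dots> = (e * w) * (beta \<alpha> z * (1 - e * w))" unfolding r1 r2 by simp
  finally have "bt * (1 - e * w) = (e * w * beta \<alpha> z) * (1 - e * w)" by (simp only: mult.assoc)
  then show ?thesis using ne unfolding bt_def e_def w_def by simp
qed

lemma integrable_heaviside_mult:
  assumes "integrable lebesgue01 k"
  shows "integrable lebesgue01 (\<lambda>y. heaviside (x - y) * k y)"
proof (rule Bochner_Integration.integrable_bound[OF assms])
  have [measurable]: "k \<in> borel_measurable lebesgue01" using assms by auto
  show "(\<lambda>y. heaviside (x - y) * k y) \<in> borel_measurable lebesgue01"
    unfolding heaviside_def by measurable
qed (auto simp: heaviside_def norm_mult)

lemma integral_heaviside_mult:
  assumes "integrable lebesgue01 k" "x \<in> {0..1}"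
  shows "(LINT y|lebesgue01. heaviside (x - y) * k y) = (LINT y|lebesgue_on {0..x}. k y)"
proof -
  have [measurable]: "k \<in> borel_measurable lebesgue01" using assms by auto
  have "(LINT y|lebesgue01. heaviside (x - y) * k y) = (LINT y|lebesgue01. (if y \<in> {0..x} then k y else 0))"
  proof (rule integral_cong_AE)
    show "(\<lambda>y. heaviside (x - y) * k y) \<in> borel_measurable lebesgue01"
      using integrable_heaviside_mult[OF assms(1)] by auto
    show "AE y in lebesgue01. heaviside (x - y) * k y = (if y \<in> {0..x} then k y else 0)"
      using AE_lebesgue_on_Icc_neq[of x 0 1] by (rule AE_mp) (rule AE_I2, auto simp: heaviside_def)
  qed measurable
  also have "\<dots> = (LINT y|lebesgue_on {0..x}. k y)"
    by (rule integral_subinterval_if[symmetric, OF assms(2)])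
  finally show ?thesis .
qed

lemma gfree_mult_eq:
  "gfree \<alpha> z x y * h y = exp (- \<i> * z * of_real x)
     * (- \<i> * (heaviside (x - y) * (exp (\<i> * z * of_real y) * h y)) + beta \<alpha> z * (exp (\<i> * z * of_real y) * h y))"
proof -
  have "exp (- \<i> * z * of_real (x - y)) = exp (- \<i> * z * of_real x) * exp (\<i> * z * of_real y)"
    by (simp add: exp_add[symmetric] algebra_simps)
  then show ?thesis unfolding gfree_def by (simp add: algebra_simps)
qed

lemma integrable_gfree_mult:
  assumes "L2 h"
  shows "integrable lebesgue01 (\<lambda>y. gfree \<alpha> z x y * h y)"
  unfolding gfree_mult_eq
  using integrable_heaviside_mult L2_integrable[OF L2_exp_mult[OF assms]] by simp

lemma Ev_eq:
  assumes h: "L2 h" and x: "x \<in> {0..1}"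
  shows "Ev \<alpha> z h x = exp (- \<i> * z * of_real x)
    * (- \<i> * exp_weighted_primitive z h x + beta \<alpha> z * exp_weighted_integral z h)"
proof -
  define k where "k y = exp (\<i> * z * of_real y) * h y" for y
  have k: "integrable lebesgue01 k" unfolding k_def by (rule L2_integrable[OF L2_exp_mult[OF h]])
  have "Ev \<alpha> z h x = exp (- \<i> * z * of_real x)
      * (- \<i> * (LINT y|lebesgue01. heaviside (x - y) * k y) + beta \<alpha> z * (LINT y|lebesgue01. k y))"
    unfolding Ev_def gfree_mult_eq k_def[symmetric]
    using integrable_heaviside_mult[OF k] k by simp
  then show ?thesis
    unfolding integral_heaviside_mult[OF k x] unfolding k_def exp_weighted_primitive_def by simp
qed

lemma Ev_W21:
  assumes h: "L2 h"
  shows "W21 (Ev \<alpha> z h) (\<lambda>x. - \<i> * z * Ev \<alpha> z h x - \<i> * h x)"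
proof (rule W21_cong[OF W21_mult[OF W21_exp_linear W21_add[OF W21_cmult W21_const]]])
  show "W21 (exp_weighted_primitive z h) (\<lambda>t. exp (\<i> * z * of_real t) * h t)"
    by (rule W21_exp_weighted_primitive[OF h])
  fix x :: real assume x: "x \<in> {0..1}"
  show "Ev \<alpha> z h x = exp ((- \<i> * z) * of_real x)
      * (- \<i> * exp_weighted_primitive z h x + beta \<alpha> z * exp_weighted_integral z h)"
    using Ev_eq[OF h x] by simp
  have "exp ((- \<i> * z) * of_real x) * exp (\<i> * z * of_real x) = 1"
    using exp_minus_inverse[of "\<i> * z * of_real x"] by (simp add: mult.commute)
  then show "- \<i> * z * Ev \<alpha> z h x - \<i> * h x
    = (- \<i> * z) * exp ((- \<i> * z) * of_real x)
        * (- \<i> * exp_weighted_primitive z h x + beta \<alpha> z * exp_weighted_integral z h)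
      + exp ((- \<i> * z) * of_real x) * (- \<i> * (exp (\<i> * z * of_real x) * h x) + 0)"
    unfolding Ev_eq[OF h x] by (simp add: algebra_simps)
qed

lemma Ev_L2: "L2 h \<Longrightarrow> L2 (Ev \<alpha> z h)"
  by (rule W21_L2[OF Ev_W21])

lemma Ev_zero: "Ev \<alpha> z (\<lambda>x. 0) = (\<lambda>x. 0)"
  unfolding Ev_def by simp

lemma Ev_at_0: "L2 h \<Longrightarrow> Ev \<alpha> z h 0 = beta \<alpha> z * exp_weighted_integral z h"
  using Ev_eq[of h 0] by (simp add: exp_weighted_primitive_0)

lemma Ev_at_1:
  assumes h: "L2 h" and z: "Im z \<noteq> 0"
  shows "Ev \<alpha> z h 1 = exp (\<i> * of_real \<alpha>) * beta \<alpha> z * exp_weighted_integral z h"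
proof -
  have "Ev \<alpha> z h 1 = exp (- \<i> * z) * (- \<i> + beta \<alpha> z) * exp_weighted_integral z h"
    using Ev_eq[OF h, of 1 \<alpha> z] by (simp add: algebra_simps)
  also have "- \<i> + beta \<alpha> z = exp (\<i> * of_real \<alpha>) * exp (\<i> * z) * beta \<alpha> z"
    using beta_mult_denominator[OF z, of \<alpha>] by (simp add: algebra_simps)
  finally show ?thesis
    using exp_minus_inverse[of "\<i> * z"] by (simp add: algebra_simps)
qed

lemma Ev_boundary:
  "L2 h \<Longrightarrow> Im z \<noteq> 0 \<Longrightarrow> Ev \<alpha> z h 1 = exp (\<i> * of_real \<alpha>) * Ev \<alpha> z h 0"
  using Ev_at_0 Ev_at_1 by (simp add: mult.assoc)

lemma E0_eq:
  "x \<in> {0..1} \<Longrightarrow> E0 \<alpha> z x = (exp (\<i> * z) * beta \<alpha> z) * exp ((- \<i> * z) * of_real x)"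
  unfolding E0_def gfree_def heaviside_def by (simp add: mult_exp_exp algebra_simps)

lemma E0_W21: "W21 (E0 \<alpha> z) (\<lambda>x. - \<i> * z * E0 \<alpha> z x)"
proof (rule W21_cong[OF W21_cmult[OF W21_exp_linear]])
  fix x :: real assume x: "x \<in> {0..1}"
  show "E0 \<alpha> z x = (exp (\<i> * z) * beta \<alpha> z) * exp ((- \<i> * z) * of_real x)"
    by (rule E0_eq[OF x])
  then show "- \<i> * z * E0 \<alpha> z x
      = (exp (\<i> * z) * beta \<alpha> z) * ((- \<i> * z) * exp ((- \<i> * z) * of_real x))"
    by simp
qed

lemma E0_L2: "L2 (E0 \<alpha> z)"
  by (rule W21_L2[OF E0_W21])

lemma E0_at_0: "E0 \<alpha> z 0 = exp (\<i> * z) * beta \<alpha> z"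
  using E0_eq[of 0] by simp

lemma E0_at_1: "E0 \<alpha> z 1 = beta \<alpha> z"
  using E0_eq[of 1] exp_minus_inverse[of "\<i> * z"] by simp

lemma Ev_adjoint:
  assumes z: "Im z \<noteq> 0" and h: "L2 h" and k: "L2 k"
  shows "ip (Ev \<alpha> z h) k = ip h (Ev \<alpha> (cnj z) k)"
proof -
  define u v where "u = Ev \<alpha> z h" and "v = Ev \<alpha> (cnj z) k"
  define u' v' where "u' x = - \<i> * z * u x - \<i> * h x" and "v' x = - \<i> * cnj z * v x - \<i> * k x" for x
  have Wu: "W21 u u'" and Wv: "W21 v v'" unfolding u_def u'_def v_def v'_def
    by (rule Ev_W21[OF h], rule Ev_W21[OF k])
  have L2: "L2 u" "L2 u'" "L2 v" "L2 v'" using Wu Wv by (auto intro: W21_L2 W21_L2_derivative)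
  have "u 1 = exp (\<i> * of_real \<alpha>) * u 0" "v 1 = exp (\<i> * of_real \<alpha>) * v 0"
    unfolding u_def v_def using Ev_boundary h k z by auto
  then have boundary: "ip u' v + ip u v' = 0"
    unfolding W21_integration_by_parts[OF Wu Wv]
    by (simp add: exp_cnj algebra_simps flip: exp_add)
  have "h = (\<lambda>x. \<i> * u' x - z * u x)" "k = (\<lambda>x. \<i> * v' x - cnj z * v x)"
    by (auto simp: u'_def v'_def fun_eq_iff algebra_simps)
  then have hv: "ip h v = \<i> * ip u' v - z * ip u v" and uk: "ip u k = - \<i> * ip u v' - z * ip u v"
    using L2 by (simp_all add: ip_diff_left ip_diff_right ip_cmult_left ip_cmult_right L2_cmult)
  have "ip u k - ip h v = - \<i> * (ip u' v + ip u v')" unfolding hv uk by (simp add: algebra_simps)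
  then have "ip u k = ip h v" unfolding boundary by simp
  then show ?thesis unfolding u_def v_def .
qed

lemma ip_E0_cnj:
  assumes v: "L2 v" and z: "Im z \<noteq> 0"
  shows "ip v (E0 \<alpha> (cnj z)) = exp (\<i> * of_real \<alpha>) * beta \<alpha> z * exp_weighted_integral z v"
proof -
  have "ip v (E0 \<alpha> (cnj z))
      = (LINT y|lebesgue01. (exp (- \<i> * z) * cnj (beta \<alpha> (cnj z))) * (exp (\<i> * z * of_real y) * v y))"
    unfolding ip_def
    by (rule Bochner_Integration.integral_cong[OF refl]) (simp add: E0_eq exp_cnj algebra_simps)
  also have "\<dots> = (exp (- \<i> * z) * cnj (beta \<alpha> (cnj z))) * exp_weighted_integral z v"
    unfolding exp_weighted_primitive_def by simp
  also have "exp (- \<i> * z) * cnj (beta \<alpha> (cnj z)) = exp (\<i> * of_real \<alpha>) * beta \<alpha> z"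
    unfolding cnj_beta_cnj[OF z] using exp_minus_inverse[of "\<i> * z"] by (simp add: algebra_simps)
  finally show ?thesis by simp
qed

section \<open>The resolvent of the perturbed operator\<close>

lemma calE_L2: "L2 v1 \<Longrightarrow> L2 v2 \<Longrightarrow> L2 (calE \<alpha> v1 v2 j w)"
  unfolding calE_def[abs_def] by (cases "j = 1") (simp_all add: L2_diff L2_add L2_cmult Ev_L2 E0_L2)

lemma Agraph_nonreal_eigenfunction_zero:
  assumes v1: "L2 v1" and v2: "L2 v2" and z: "Im z \<noteq> 0"
    and psi: "(psi, \<lambda>x. z * psi x) \<in> Agraph v1 v2 \<alpha>" and x: "x \<in> {0..1}"
  shows "psi x = 0"
proof -
  have "ip (\<lambda>x. z * psi x) psi = ip psi (\<lambda>x. z * psi x)"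
    by (rule Agraph_symmetric[OF v1 v2 psi psi])
  then have "(z - cnj z) * ip psi psi = 0"
    by (simp add: ip_cmult_left ip_cmult_right algebra_simps)
  moreover have "z - cnj z \<noteq> 0" using z by (auto simp: complex_eq_iff)
  ultimately have "ip psi psi = 0" by simp
  moreover have "continuous_on {0..1} psi"
    using psi by (auto elim: AgraphE intro: W21_continuous)
  ultimately show ?thesis using ip_self_eq_0_imp_zero x by blast
qed

lemma singular_2x2_kernel:
  fixes a b c d :: "'a::field"
  assumes "a * d - b * c = 0"
  obtains x y where "(x, y) \<noteq> (0, 0)" "a * x + b * y = 0" "c * x + d * y = 0"
proof (cases "(a, b) = (0, 0)")
  case False
  then show ?thesis using assms that[of b "- a"] by (auto simp: algebra_simps)
next
  case ab: True
  show ?thesis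
  proof (cases "(c, d) = (0, 0)")
    case True
    then show ?thesis using ab that[of 1 0] by auto
  next
    case False
    then show ?thesis using assms ab that[of d "- c"] by (auto simp: algebra_simps)
  qed
qed

lemma cramer_2x2:
  fixes a b c d r1 r2 :: "'a::field"
  assumes "a * d - b * c \<noteq> 0"
  defines "x1 \<equiv> - (d * r1 - b * r2) / (a * d - b * c)"
    and "x2 \<equiv> - (a * r2 - c * r1) / (a * d - b * c)"
  shows "r1 + a * x1 + b * x2 = 0" "r2 + c * x1 + d * x2 = 0"
  using assms by (simp_all add: field_simps)

locale nonreal_point =
  fixes \<alpha> :: real and v1 v2 :: "real \<Rightarrow> complex" and z :: complex
  assumes v1: "L2 v1" and v2: "L2 v2" and z: "Im z \<noteq> 0"
begin

abbreviation "ea \<equiv> exp (\<i> * of_real \<alpha>)"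
abbreviation "ez \<equiv> exp (\<i> * z)"
abbreviation "bz \<equiv> beta \<alpha> z"
abbreviation "calE1 \<equiv> calE \<alpha> v1 v2 1 z"
abbreviation "calE2 \<equiv> calE \<alpha> v1 v2 2 z"

text \<open>The brackets multiplying \<open>v1\<close> and \<open>v2\<close> in the definition of the operator.\<close>

definition coupling1 :: "(real \<Rightarrow> complex) \<Rightarrow> complex" where
  "coupling1 psi = psi 0 - \<i>/2 * ip psi v1"

definition coupling2 :: "(real \<Rightarrow> complex) \<Rightarrow> complex" where
  "coupling2 psi = psi 1 + \<i>/2 * ip psi v2"

lemma calE1_eq: "calE1 = (\<lambda>x. Ev \<alpha> z v1 x + (- 2 * \<i> * ea) * E0 \<alpha> z x)"
  by (simp add: calE_def fun_eq_iff)

lemma calE2_eq: "calE2 = (\<lambda>x. Ev \<alpha> z v2 x + (2 * \<i>) * E0 \<alpha> z x)"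
  by (simp add: calE_def fun_eq_iff)

lemma calE1_W21: "W21 calE1 (\<lambda>x. - \<i> * z * calE1 x - \<i> * v1 x)"
proof (rule W21_cong[OF W21_add[OF Ev_W21[OF v1] W21_cmult[OF E0_W21]]])
  show "calE1 x = Ev \<alpha> z v1 x + (- 2 * \<i> * ea) * E0 \<alpha> z x" for x
    by (simp add: calE_def)
  show "- \<i> * z * calE1 x - \<i> * v1 x
      = (- \<i> * z * Ev \<alpha> z v1 x - \<i> * v1 x) + (- 2 * \<i> * ea) * (- \<i> * z * E0 \<alpha> z x)" for x
    by (simp add: calE_def algebra_simps)
qed

lemma calE2_W21: "W21 calE2 (\<lambda>x. - \<i> * z * calE2 x - \<i> * v2 x)"
proof (rule W21_cong[OF W21_add[OF Ev_W21[OF v2] W21_cmult[OF E0_W21]]])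
  show "calE2 x = Ev \<alpha> z v2 x + (2 * \<i>) * E0 \<alpha> z x" for x
    by (simp add: calE_def)
  show "- \<i> * z * calE2 x - \<i> * v2 x
      = (- \<i> * z * Ev \<alpha> z v2 x - \<i> * v2 x) + (2 * \<i>) * (- \<i> * z * E0 \<alpha> z x)" for x
    by (simp add: calE_def algebra_simps)
qed

lemma calE1_boundary: "calE1 1 - ea * calE1 0 = 2 * ea"
proof -
  have at1: "calE1 1 = ea * Ev \<alpha> z v1 0 - 2 * \<i> * ea * bz"
    and at0: "calE1 0 = Ev \<alpha> z v1 0 - 2 * \<i> * ea * (ez * bz)"
    unfolding calE1_eq E0_at_0 E0_at_1 Ev_boundary[OF v1 z] by simp_all
  have "calE1 1 - ea * calE1 0 = - 2 * \<i> * ea * (bz * (1 - ea * ez))"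
    unfolding at0 at1 by (simp add: algebra_simps)
  also have "\<dots> = 2 * ea" unfolding beta_mult_denominator[OF z] by (simp add: algebra_simps)
  finally show ?thesis .
qed

lemma calE2_boundary: "calE2 1 - ea * calE2 0 = - 2"
proof -
  have at1: "calE2 1 = ea * Ev \<alpha> z v2 0 + 2 * \<i> * bz"
    and at0: "calE2 0 = Ev \<alpha> z v2 0 + 2 * \<i> * (ez * bz)"
    unfolding calE2_eq E0_at_0 E0_at_1 Ev_boundary[OF v2 z] by simp_all
  have "calE2 1 - ea * calE2 0 = 2 * \<i> * (bz * (1 - ea * ez))"
    unfolding at0 at1 by (simp add: algebra_simps)
  also have "\<dots> = - 2" unfolding beta_mult_denominator[OF z] by (simp add: algebra_simps)
  finally show ?thesis .
qed

definition ansatz :: "(real \<Rightarrow> complex) \<Rightarrow> complex \<Rightarrow> complex \<Rightarrow> real \<Rightarrow> complex" where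
  "ansatz f c1 c2 x = Ev \<alpha> z f x + c1 * calE1 x + c2 * calE2 x"

lemma ansatz_W21:
  assumes "L2 f"
  shows "W21 (ansatz f c1 c2) (\<lambda>x. - \<i> * z * ansatz f c1 c2 x - \<i> * (f x + c1 * v1 x + c2 * v2 x))"
proof (rule W21_cong[OF W21_add[OF W21_add[OF Ev_W21[OF assms] W21_cmult[OF calE1_W21]]
      W21_cmult[OF calE2_W21]]])
  show "ansatz f c1 c2 x = Ev \<alpha> z f x + c1 * calE1 x + c2 * calE2 x" for x
    by (simp add: ansatz_def)
  show "- \<i> * z * ansatz f c1 c2 x - \<i> * (f x + c1 * v1 x + c2 * v2 x)
      = (- \<i> * z * Ev \<alpha> z f x - \<i> * f x) + c1 * (- \<i> * z * calE1 x - \<i> * v1 x)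
        + c2 * (- \<i> * z * calE2 x - \<i> * v2 x)" for x
    by (simp add: ansatz_def algebra_simps)
qed

lemma ansatz_boundary:
  assumes "L2 f"
  shows "ansatz f c1 c2 1 - ea * ansatz f c1 c2 0 = 2 * ea * c1 - 2 * c2"
proof -
  have "ansatz f c1 c2 1 - ea * ansatz f c1 c2 0 = (Ev \<alpha> z f 1 - ea * Ev \<alpha> z f 0)
      + c1 * (calE1 1 - ea * calE1 0) + c2 * (calE2 1 - ea * calE2 0)"
    by (simp add: ansatz_def algebra_simps)
  then show ?thesis
    unfolding calE1_boundary calE2_boundary Ev_boundary[OF assms z] by simp
qed

lemma ansatz_in_Agraph:
  assumes f: "L2 f"
    and C1: "c1 + coupling1 (ansatz f c1 c2) = 0" and C2: "c2 + coupling2 (ansatz f c1 c2) = 0"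
  shows "(ansatz f c1 c2, \<lambda>x. z * ansatz f c1 c2 x + f x) \<in> Agraph v1 v2 \<alpha>"
proof -
  define p where "p = ansatz f c1 c2"
  have c1: "c1 = - (p 0 - \<i>/2 * ip p v1)" and c2: "c2 = - (p 1 + \<i>/2 * ip p v2)"
    using C1 C2 unfolding eq_neg_iff_add_eq_0 p_def coupling1_def coupling2_def by simp_all
  have "p 1 - ea * p 0 = 2 * ea * c1 - 2 * c2"
    unfolding p_def by (rule ansatz_boundary[OF f])
  then have bc: "p 1 + \<i> * ip p v2 = ea * (p 0 - \<i> * ip p v1)"
    unfolding c1 c2 by (simp add: algebra_simps)
  have g: "z * p x + f x = \<i> * (- \<i> * z * p x - \<i> * (f x + c1 * v1 x + c2 * v2 x))
      + v1 x * (p 0 - \<i> / 2 * ip p v1) + v2 x * (p 1 + \<i> / 2 * ip p v2)" for x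
    unfolding c1 c2 by (simp add: algebra_simps)
  show ?thesis
    unfolding p_def[symmetric] using ansatz_W21[OF f, of c1 c2, folded p_def] bc g by (rule AgraphI)
qed

lemma coupling1_ansatz:
  "L2 f \<Longrightarrow> coupling1 (ansatz f c1 c2) = coupling1 (Ev \<alpha> z f) + c1 * coupling1 calE1 + c2 * coupling1 calE2"
  unfolding coupling1_def ansatz_def[abs_def] using v1 v2 calE_L2[OF v1 v2]
  by (simp add: ip_add_left ip_cmult_left L2_add L2_cmult Ev_L2 algebra_simps)

lemma coupling2_ansatz:
  "L2 f \<Longrightarrow> coupling2 (ansatz f c1 c2) = coupling2 (Ev \<alpha> z f) + c1 * coupling2 calE1 + c2 * coupling2 calE2"
  unfolding coupling2_def ansatz_def[abs_def] using v1 v2 calE_L2[OF v1 v2]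
  by (simp add: ip_add_left ip_cmult_left L2_add L2_cmult Ev_L2 algebra_simps)

lemma ip_calE1: "L2 v \<Longrightarrow> ip calE1 v = ip (Ev \<alpha> z v1) v - 2 * \<i> * ea * ip (E0 \<alpha> z) v"
  unfolding calE1_eq using v1 by (simp add: ip_diff_left ip_cmult_left L2_cmult Ev_L2 E0_L2)

lemma ip_calE2: "L2 v \<Longrightarrow> ip calE2 v = ip (Ev \<alpha> z v2) v + 2 * \<i> * ip (E0 \<alpha> z) v"
  unfolding calE2_eq using v2 by (simp add: ip_add_left ip_cmult_left L2_cmult Ev_L2 E0_L2)

lemma coupling_calE:
  "coupling1 calE1 = bz * exp_weighted_integral z v1 - 2 * \<i> * ea * ez * bz
     - \<i>/2 * ip (Ev \<alpha> z v1) v1 - ea * ip (E0 \<alpha> z) v1"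
  "coupling1 calE2 = bz * exp_weighted_integral z v2 + 2 * \<i> * ez * bz
     - \<i>/2 * ip (Ev \<alpha> z v2) v1 + ip (E0 \<alpha> z) v1"
  "coupling2 calE1 = ea * bz * exp_weighted_integral z v1 - 2 * \<i> * ea * bz
     + \<i>/2 * ip (Ev \<alpha> z v1) v2 + ea * ip (E0 \<alpha> z) v2"
  "coupling2 calE2 = ea * bz * exp_weighted_integral z v2 + 2 * \<i> * bz
     + \<i>/2 * ip (Ev \<alpha> z v2) v2 - ip (E0 \<alpha> z) v2"
  unfolding coupling1_def coupling2_def ip_calE1[OF v1] ip_calE1[OF v2] ip_calE2[OF v1] ip_calE2[OF v2]
  by (simp_all add: calE_def Ev_at_0 Ev_at_1 v1 v2 z E0_at_0 E0_at_1 algebra_simps)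

lemma gam_eq_coupling:
  "gam \<alpha> v1 v2 z 1 1 = - 2 * \<i> * (1 + coupling2 calE2)"
  "gam \<alpha> v1 v2 z 1 2 = - 2 * \<i> * coupling1 calE2"
  "gam \<alpha> v1 v2 z 2 1 = 2 * \<i> * coupling2 calE1"
  "gam \<alpha> v1 v2 z 2 2 = 2 * \<i> * (1 + coupling1 calE1)"
proof -
  have "exp (- \<i> * of_real \<alpha>) * ea = 1"
    using exp_minus_inverse[of "\<i> * of_real \<alpha>"] by (simp add: mult.commute)
  then have eam: "exp (- \<i> * of_real \<alpha>) * ip v (E0 \<alpha> (cnj z)) = bz * exp_weighted_integral z v"
    if "L2 v" for v
    unfolding ip_E0_cnj[OF that z] by (metis mult.assoc mult.left_neutral)
  show "gam \<alpha> v1 v2 z 1 1 = - 2 * \<i> * (1 + coupling2 calE2)"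
    unfolding gam_def Let_def coupling_calE ip_E0_cnj[OF v2 z] by (simp add: algebra_simps)
  show "gam \<alpha> v1 v2 z 1 2 = - 2 * \<i> * coupling1 calE2"
    unfolding gam_def Let_def coupling_calE eam[OF v2] by (simp add: algebra_simps)
  show "gam \<alpha> v1 v2 z 2 1 = 2 * \<i> * coupling2 calE1"
    unfolding gam_def Let_def coupling_calE ip_E0_cnj[OF v1 z] by (simp add: algebra_simps)
  show "gam \<alpha> v1 v2 z 2 2 = 2 * \<i> * (1 + coupling1 calE1)"
    unfolding gam_def Let_def coupling_calE eam[OF v1] by (simp add: algebra_simps)
qed

lemma gdet_eq_coupling:
  "gdet \<alpha> v1 v2 z = 4 * ((1 + coupling1 calE1) * (1 + coupling2 calE2) - coupling1 calE2 * coupling2 calE1)"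
  unfolding gdet_def gam_eq_coupling by (simp add: algebra_simps)

lemma ip_calE_cnj:
  assumes f: "L2 f"
  shows "ip f (calE \<alpha> v1 v2 1 (cnj z)) = 2 * \<i> * coupling1 (Ev \<alpha> z f)"
    and "ip f (calE \<alpha> v1 v2 2 (cnj z)) = - 2 * \<i> * coupling2 (Ev \<alpha> z f)"
proof -
  have ea: "cnj ea * ea = 1" by (simp add: exp_cnj flip: exp_add)
  have "ip f (calE \<alpha> v1 v2 1 (cnj z))
      = ip f (Ev \<alpha> (cnj z) v1) - cnj (2 * \<i> * ea) * ip f (E0 \<alpha> (cnj z))"
    unfolding calE_def[abs_def] using f v1 by (simp add: ip_diff_right ip_cmult_right L2_cmult Ev_L2 E0_L2)
  also have "\<dots> = ip (Ev \<alpha> z f) v1 + 2 * \<i> * (cnj ea * ea) * bz * exp_weighted_integral z f"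
    unfolding Ev_adjoint[OF z f v1, symmetric] ip_E0_cnj[OF f z] by (simp add: algebra_simps)
  finally show "ip f (calE \<alpha> v1 v2 1 (cnj z)) = 2 * \<i> * coupling1 (Ev \<alpha> z f)"
    unfolding ea coupling1_def Ev_at_0[OF f] by (simp add: algebra_simps)
  have "ip f (calE \<alpha> v1 v2 2 (cnj z))
      = ip f (Ev \<alpha> (cnj z) v2) + cnj (2 * \<i>) * ip f (E0 \<alpha> (cnj z))"
    unfolding calE_def[abs_def] using f v2 by (simp add: ip_add_right ip_cmult_right L2_cmult Ev_L2 E0_L2)
  then show "ip f (calE \<alpha> v1 v2 2 (cnj z)) = - 2 * \<i> * coupling2 (Ev \<alpha> z f)"
    unfolding Ev_adjoint[OF z f v2, symmetric] ip_E0_cnj[OF f z] coupling2_def Ev_at_1[OF f z]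
    by (simp add: algebra_simps)
qed

lemma gdet_nonzero: "gdet \<alpha> v1 v2 z \<noteq> 0"
proof
  assume "gdet \<alpha> v1 v2 z = 0"
  then have "(1 + coupling1 calE1) * (1 + coupling2 calE2) - coupling1 calE2 * coupling2 calE1 = 0"
    unfolding gdet_eq_coupling by simp
  then obtain c1 c2 where nz: "(c1, c2) \<noteq> (0, 0)"
    and e1: "(1 + coupling1 calE1) * c1 + coupling1 calE2 * c2 = 0"
    and e2: "coupling2 calE1 * c1 + (1 + coupling2 calE2) * c2 = 0"
    by (rule singular_2x2_kernel)
  define p where "p = ansatz (\<lambda>x. 0) c1 c2"
  have "coupling1 (Ev \<alpha> z (\<lambda>x. 0)) = 0" "coupling2 (Ev \<alpha> z (\<lambda>x. 0)) = 0"
    unfolding coupling1_def coupling2_def Ev_zero by (simp_all add: ip_zero_left)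
  then have C1: "c1 + coupling1 p = 0" and C2: "c2 + coupling2 p = 0"
    using e1 e2 unfolding p_def coupling1_ansatz[OF L2_zero] coupling2_ansatz[OF L2_zero]
    by (simp_all add: algebra_simps)
  have "(p, \<lambda>x. z * p x) \<in> Agraph v1 v2 \<alpha>"
    using ansatz_in_Agraph[OF L2_zero C1[unfolded p_def] C2[unfolded p_def]] unfolding p_def by simp
  then have p0: "p x = 0" if "x \<in> {0..1}" for x
    using Agraph_nonreal_eigenfunction_zero[OF v1 v2 z _ that] by blast
  have "ip p v1 = 0" "ip p v2 = 0"
    using ip_cong_left[of p "\<lambda>x. 0"] p0 by (simp_all add: ip_zero_left)
  then have "c1 = 0" "c2 = 0" using C1 C2 p0[of 0] p0[of 1] by (simp_all add: coupling1_def coupling2_def)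
  then show False using nz by simp
qed

definition coeff :: "nat \<Rightarrow> (real \<Rightarrow> complex) \<Rightarrow> complex" where
  "coeff j f = - (1 / gdet \<alpha> v1 v2 z) * (\<Sum>k\<in>{1,2}. gam \<alpha> v1 v2 z j k * ip f (calE \<alpha> v1 v2 k (cnj z)))"

lemma coeff_solves_coupling:
  assumes f: "L2 f"
  defines "p \<equiv> ansatz f (coeff 1 f) (coeff 2 f)"
  shows "coeff 1 f + coupling1 p = 0" "coeff 2 f + coupling2 p = 0"
proof -
  define B11 B12 B21 B22 where "B11 = coupling1 calE1" and "B12 = coupling1 calE2"
    and "B21 = coupling2 calE1" and "B22 = coupling2 calE2"
  define r1 r2 where "r1 = coupling1 (Ev \<alpha> z f)" and "r2 = coupling2 (Ev \<alpha> z f)"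
  define D where "D = (1 + B11) * (1 + B22) - B12 * B21"
  have D0: "D \<noteq> 0"
    using gdet_nonzero unfolding gdet_eq_coupling D_def B11_def B12_def B21_def B22_def by simp
  have sum12: "(\<Sum>k\<in>{1,2}. h k) = h 1 + h 2" for h :: "nat \<Rightarrow> complex" by simp
  have c: "coeff 1 f = - (1 / (4 * D)) * (4 * ((1 + B22) * r1 - B12 * r2))"
    "coeff 2 f = - (1 / (4 * D)) * (4 * ((1 + B11) * r2 - B21 * r1))"
    unfolding coeff_def sum12 gdet_eq_coupling gam_eq_coupling ip_calE_cnj[OF f]
      B11_def B12_def B21_def B22_def r1_def r2_def D_def by (simp_all add: algebra_simps)
  have four: "- (1 / (4 * D)) * (4 * X) = - X / D" for X by simp
  have cramer: "r1 + (1 + B11) * coeff 1 f + B12 * coeff 2 f = 0"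
    "r2 + B21 * coeff 1 f + (1 + B22) * coeff 2 f = 0"
    unfolding c[unfolded four] D_def by (rule cramer_2x2[OF D0[unfolded D_def]])+
  have "coeff 1 f + coupling1 p = r1 + (1 + B11) * coeff 1 f + B12 * coeff 2 f"
    "coeff 2 f + coupling2 p = r2 + B21 * coeff 1 f + (1 + B22) * coeff 2 f"
    unfolding p_def coupling1_ansatz[OF f] coupling2_ansatz[OF f] B11_def B12_def B21_def B22_def
      r1_def r2_def by (simp_all add: algebra_simps)
  then show "coeff 1 f + coupling1 p = 0" "coeff 2 f + coupling2 p = 0"
    unfolding cramer by simp_all
qed

lemma integral_res_kernel:
  assumes f: "L2 f"
  shows "(LINT y|lebesgue01. res_kernel \<alpha> v1 v2 z x y * f y) = ansatz f (coeff 1 f) (coeff 2 f) x"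
proof -
  define I where "I k = ip f (calE \<alpha> v1 v2 k (cnj z))" for k
  have int: "integrable lebesgue01 (\<lambda>y. f y * cnj (calE \<alpha> v1 v2 k (cnj z) y))" for k
    by (rule L2_ip_integrable[OF f calE_L2[OF v1 v2]])
  have "res_kernel \<alpha> v1 v2 z x y * f y = gfree \<alpha> z x y * f y - (1 / gdet \<alpha> v1 v2 z) *
      (\<Sum>j\<in>{1,2}. \<Sum>k\<in>{1,2}. (calE \<alpha> v1 v2 j z x * gam \<alpha> v1 v2 z j k)
        * (f y * cnj (calE \<alpha> v1 v2 k (cnj z) y)))" for y
    unfolding res_kernel_def by (simp add: algebra_simps)
  then have "(LINT y|lebesgue01. res_kernel \<alpha> v1 v2 z x y * f y) = Ev \<alpha> z f x - (1 / gdet \<alpha> v1 v2 z) *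
      (\<Sum>j\<in>{1,2}. \<Sum>k\<in>{1,2}. calE \<alpha> v1 v2 j z x * gam \<alpha> v1 v2 z j k * I k)"
    using integrable_gfree_mult[OF f] int unfolding Ev_def I_def ip_def by simp
  then show ?thesis unfolding ansatz_def coeff_def I_def by (simp add: algebra_simps)
qed

lemma resolvent_in_Agraph:
  assumes f: "L2 f"
  shows "\<exists>(psi, g)\<in>Agraph v1 v2 \<alpha>.
           ae_eq psi (\<lambda>x. LINT y|lebesgue_on {0..1}. res_kernel \<alpha> v1 v2 z x y * f y)
         \<and> ae_eq g (\<lambda>x. z * psi x + f x)"
proof -
  have "(ansatz f (coeff 1 f) (coeff 2 f), \<lambda>x. z * ansatz f (coeff 1 f) (coeff 2 f) x + f x) \<in> Agraph v1 v2 \<alpha>"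
    using coeff_solves_coupling[OF f] by (rule ansatz_in_Agraph[OF f])
  then show ?thesis unfolding integral_res_kernel[OF f] ae_eq_def by (rule bexI[rotated]) simp
qed

lemma gam_cnj:
  "cnj (gam \<alpha> v1 v2 (cnj z) 1 1) = gam \<alpha> v1 v2 z 1 1"
  "cnj (gam \<alpha> v1 v2 (cnj z) 2 1) = gam \<alpha> v1 v2 z 1 2"
  "cnj (gam \<alpha> v1 v2 (cnj z) 1 2) = gam \<alpha> v1 v2 z 2 1"
  "cnj (gam \<alpha> v1 v2 (cnj z) 2 2) = gam \<alpha> v1 v2 z 2 2"
proof -
  have adj: "ip h (Ev \<alpha> (cnj z) k) = ip (Ev \<alpha> z h) k" if "L2 h" "L2 k" for h k
    using Ev_adjoint[OF z that] by simp
  have ea: "exp (- (\<i> * of_real \<alpha>)) * ea = 1" and ez: "ez * exp (- (\<i> * z)) = 1"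
    using exp_minus_inverse[of "\<i> * of_real \<alpha>"] exp_minus_inverse[of "\<i> * z"] by (simp_all add: mult.commute)
  note simps = gam_def Let_def ip_cnj[symmetric] adj v1 v2 cnj_beta_cnj[OF z] exp_cnj
  have "cnj (gam \<alpha> v1 v2 (cnj z) 1 1) - gam \<alpha> v1 v2 z 1 1 = 2 * \<i> * (2 + 2 * \<i> * (bz * (1 - ea * ez)))"
    by (simp add: simps algebra_simps)
  then show "cnj (gam \<alpha> v1 v2 (cnj z) 1 1) = gam \<alpha> v1 v2 z 1 1"
    unfolding beta_mult_denominator[OF z] by (simp add: algebra_simps)
  have "cnj (gam \<alpha> v1 v2 (cnj z) 2 1) - gam \<alpha> v1 v2 z 1 2
      = - 2 * \<i> * (2 * \<i> * ez * bz * (exp (- (\<i> * of_real \<alpha>)) * ea - 1))"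
    by (simp add: simps algebra_simps)
  then show "cnj (gam \<alpha> v1 v2 (cnj z) 2 1) = gam \<alpha> v1 v2 z 1 2"
    unfolding ea by simp
  have "cnj (gam \<alpha> v1 v2 (cnj z) 1 2) - gam \<alpha> v1 v2 z 2 1
      = 2 * \<i> * (- 2 * \<i> * ea * bz * (ez * exp (- (\<i> * z)) - 1))"
    by (simp add: simps algebra_simps)
  then show "cnj (gam \<alpha> v1 v2 (cnj z) 1 2) = gam \<alpha> v1 v2 z 2 1"
    unfolding ez by simp
  have "cnj (gam \<alpha> v1 v2 (cnj z) 2 2) - gam \<alpha> v1 v2 z 2 2
      = - 2 * \<i> * (2 + 2 * \<i> * bz * ((exp (- (\<i> * of_real \<alpha>)) * ea) * (ez * exp (- (\<i> * z))))
          - 2 * \<i> * ea * ez * bz)"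
    by (simp add: simps algebra_simps)
  also have "\<dots> = - 2 * \<i> * (2 + 2 * \<i> * (bz * (1 - ea * ez)))"
    unfolding ea ez by (simp add: algebra_simps)
  finally show "cnj (gam \<alpha> v1 v2 (cnj z) 2 2) = gam \<alpha> v1 v2 z 2 2"
    unfolding beta_mult_denominator[OF z] by (simp add: algebra_simps)
qed

lemma gdet_cnj: "cnj (gdet \<alpha> v1 v2 (cnj z)) = gdet \<alpha> v1 v2 z"
  unfolding gdet_def using gam_cnj by (simp add: mult.commute)

end

section \<open>Density of the domain\<close>

lemma norm_add_squared_le: "(norm (a + b))^2 \<le> 2 * (norm a)^2 + 2 * (norm b)^2"
proof -
  have "(norm (a + b))^2 \<le> (norm a + norm b)^2" by (simp add: power_mono norm_triangle_ineq)
  also have "\<dots> \<le> 2 * (norm a)^2 + 2 * (norm b)^2"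
    using sum_squares_bound[of "norm a" "norm b"] by (simp add: power2_sum)
  finally show ?thesis .
qed

lemma integral_diff_squared_triangle:
  assumes "L2 f" "L2 g" "L2 h"
  shows "(LINT x|lebesgue01. (cmod (f x - h x))^2)
    \<le> 2 * (LINT x|lebesgue01. (cmod (f x - g x))^2) + 2 * (LINT x|lebesgue01. (cmod (g x - h x))^2)"
proof -
  have i: "integrable lebesgue01 (\<lambda>x. (cmod (u x - w x))^2)" if "L2 u" "L2 w" for u w
    using L2_integrable_square[OF L2_diff[OF that]] .
  have "(LINT x|lebesgue01. (cmod (f x - h x))^2)
      \<le> (LINT x|lebesgue01. 2 * (cmod (f x - g x))^2 + 2 * (cmod (g x - h x))^2)"
  proof (rule integral_mono)
    show "(cmod (f x - h x))^2 \<le> 2 * (cmod (f x - g x))^2 + 2 * (cmod (g x - h x))^2" for x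
      using norm_add_squared_le[of "f x - g x" "g x - h x"] by simp
  qed (use assms i in auto)
  also have "\<dots> = 2 * (LINT x|lebesgue01. (cmod (f x - g x))^2) + 2 * (LINT x|lebesgue01. (cmod (g x - h x))^2)"
    using assms by (simp add: i)
  finally show ?thesis .
qed

definition clip :: "real \<Rightarrow> complex \<Rightarrow> complex" where
  "clip M w = (M / max M (cmod w)) *\<^sub>R w"

lemma continuous_on_clip: "M > 0 \<Longrightarrow> continuous_on S (clip M)"
  unfolding clip_def by (intro continuous_intros) auto

lemma borel_measurable_clip [measurable]:
  "M > 0 \<Longrightarrow> f \<in> borel_measurable N \<Longrightarrow> (\<lambda>x. clip M (f x)) \<in> borel_measurable N"
  by (rule borel_measurable_continuous_on[OF continuous_on_clip])

lemma norm_clip_le: assumes "M > 0" shows "cmod (clip M w) \<le> M"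
proof (cases "cmod w \<le> M")
  case False
  then have "w \<noteq> 0" using assms by auto
  then have "cmod (clip M w) = M / cmod w * cmod w" using False assms by (simp add: clip_def max_def)
  also have "\<dots> = M" using \<open>w \<noteq> 0\<close> by simp
  finally show ?thesis by simp
qed (use assms in \<open>simp add: clip_def max_def\<close>)

lemma clip_eq_self: "cmod w \<le> M \<Longrightarrow> M > 0 \<Longrightarrow> clip M w = w"
  by (simp add: clip_def max_def)

lemma norm_diff_clip_le: assumes "M > 0" shows "cmod (w - clip M w) \<le> cmod w"
proof (cases "cmod w \<le> M")
  case False
  then have w: "cmod w > 0" "M / cmod w < 1" using assms by (auto simp: divide_less_eq)
  have "w - clip M w = (1 - M / cmod w) *\<^sub>R w" unfolding clip_def using False by (simp add: algebra_simps)
  then have "cmod (w - clip M w) = \<bar>1 - M / cmod w\<bar> * cmod w" by simp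
  also have "\<dots> \<le> cmod w" using w assms by (intro mult_left_le_one_le) auto
  finally show ?thesis .
qed (use assms in \<open>simp add: clip_eq_self\<close>)

lemma L2_clip_approx:
  assumes f: "L2 f" and d: "d > 0"
  obtains M where "M > 0" "(LINT x|lebesgue01. (cmod (f x - clip M (f x)))^2) < d"
proof -
  have [measurable]: "f \<in> borel_measurable lebesgue01" using f by (rule L2_measurable)
  define s where "s n x = (cmod (f x - clip (Suc n) (f x)))^2" for n x
  have "(\<lambda>n. LINT x|lebesgue01. s n x) \<longlonglongrightarrow> (LINT x|lebesgue01. 0)"
  proof (rule integral_dominated_convergence[where w="\<lambda>x. (cmod (f x))^2"])
    show "AE x in lebesgue01. (\<lambda>n. s n x) \<longlonglongrightarrow> 0"
    proof (rule AE_I2)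
      fix x
      obtain N :: nat where "cmod (f x) \<le> real N" using real_arch_simple by blast
      then have "\<forall>n\<ge>N. s n x = 0" unfolding s_def by (auto simp: clip_eq_self)
      then show "(\<lambda>n. s n x) \<longlonglongrightarrow> 0"
        by (intro tendsto_eventually) (auto simp: eventually_sequentially)
    qed
    show "AE x in lebesgue01. norm (s n x) \<le> (cmod (f x))^2" for n
      unfolding s_def by (rule AE_I2) (simp add: power_mono norm_diff_clip_le)
  qed (use f in \<open>auto simp: s_def L2_def\<close>)
  then have "eventually (\<lambda>n. (LINT x|lebesgue01. s n x) < d) sequentially"
    using d by (simp add: order_tendstoD(2))
  then obtain n where "(LINT x|lebesgue01. s n x) < d" by (auto simp: eventually_sequentially)
  then show ?thesis using that[of "real (Suc n)"] unfolding s_def by simp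
qed

lemma borel_measurable_ae_continuous_limit:
  fixes f :: "real \<Rightarrow> 'a::euclidean_space"
  assumes "f \<in> borel_measurable lebesgue01"
  obtains gs where "\<And>n. continuous_on {0..1} (gs n)" "AE x in lebesgue01. (\<lambda>n. gs n x) \<longlonglongrightarrow> f x"
proof -
  have "f measurable_on {0..1}"
    using assms measurable_on_iff_borel_measurable[of "{0..1::real}" f] by simp
  then obtain N gs where N: "negligible N" and gc: "\<And>n. continuous_on UNIV (gs n)"
    and gl: "\<And>x. x \<notin> N \<Longrightarrow> (\<lambda>n. gs n x) \<longlonglongrightarrow> (if x \<in> {0..1} then f x else 0)"
    unfolding measurable_on_def by blast
  have "AE x in lebesgue01. (\<lambda>n. gs n x) \<longlonglongrightarrow> f x"
    using AE_lebesgue_on_Icc_not_in_negligible[OF N] by (rule AE_mp) (rule AE_I2, auto dest: gl)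
  then show ?thesis using that continuous_on_subset[OF gc] by blast
qed

text \<open>Truncation keeps the continuous approximants uniformly bounded, so that dominated
  convergence applies.\<close>

lemma clip_continuous_approx:
  assumes f: "f \<in> borel_measurable lebesgue01" and M: "M > 0" and d: "d > 0"
  obtains h where "continuous_on {0..1} h" "(LINT x|lebesgue01. (cmod (clip M (f x) - h x))^2) < d"
proof -
  obtain gs where gc: "\<And>n. continuous_on {0..1} (gs n)"
    and gl: "AE x in lebesgue01. (\<lambda>n. gs n x) \<longlonglongrightarrow> f x"
    using borel_measurable_ae_continuous_limit[OF f] by blast
  have [measurable]: "f \<in> borel_measurable lebesgue01" "gs n \<in> borel_measurable lebesgue01" for n
    using f gc by (auto intro: continuous_imp_measurable_on_Icc)
  define s where "s n x = (cmod (clip M (f x) - clip M (gs n x)))^2" for n x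
  have "(\<lambda>n. LINT x|lebesgue01. s n x) \<longlonglongrightarrow> (LINT x|lebesgue01. 0)"
  proof (rule integral_dominated_convergence[where w="\<lambda>x. (2 * M)^2"])
    show "AE x in lebesgue01. (\<lambda>n. s n x) \<longlonglongrightarrow> 0"
      using gl
    proof (rule AE_mp, intro AE_I2 impI)
      fix x assume "(\<lambda>n. gs n x) \<longlonglongrightarrow> f x"
      moreover have "isCont (clip M) (f x)"
        using continuous_on_clip[OF M, of UNIV] continuous_on_eq_continuous_at by blast
      ultimately have "(\<lambda>n. clip M (gs n x)) \<longlonglongrightarrow> clip M (f x)"
        by (rule isCont_tendsto_compose[rotated])
      then have "(\<lambda>n. (cmod (clip M (f x) - clip M (gs n x)))^2)
          \<longlonglongrightarrow> (cmod (clip M (f x) - clip M (f x)))^2"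
        by (intro tendsto_intros)
      then show "(\<lambda>n. s n x) \<longlonglongrightarrow> 0" unfolding s_def by simp
    qed
    show "AE x in lebesgue01. norm (s n x) \<le> (2 * M)^2" for n
    proof (rule AE_I2)
      fix x
      have "cmod (clip M (f x) - clip M (gs n x)) \<le> 2 * M"
        using norm_triangle_ineq4[of "clip M (f x)" "clip M (gs n x)"]
          norm_clip_le[OF M, of "f x"] norm_clip_le[OF M, of "gs n x"] by linarith
      then have "(cmod (clip M (f x) - clip M (gs n x)))^2 \<le> (2 * M)^2"
        by (rule power_mono) simp
      then show "norm (s n x) \<le> (2 * M)^2" unfolding s_def by simp
    qed
  qed (use M in \<open>auto simp: s_def\<close>)
  then have "eventually (\<lambda>n. (LINT x|lebesgue01. s n x) < d) sequentially"
    using d by (simp add: order_tendstoD(2))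
  then obtain n where "(LINT x|lebesgue01. s n x) < d" by (auto simp: eventually_sequentially)
  moreover have "continuous_on {0..1} (\<lambda>x. clip M (gs n x))"
    by (rule continuous_on_compose2[OF continuous_on_clip[OF M] gc]) auto
  ultimately show ?thesis using that unfolding s_def by blast
qed

lemma L2_continuous_approx:
  assumes f: "L2 f" and d: "d > 0"
  obtains h where "continuous_on {0..1} h" "(LINT x|lebesgue01. (cmod (f x - h x))^2) < d"
proof -
  obtain M where M: "M > 0" and fM: "(LINT x|lebesgue01. (cmod (f x - clip M (f x)))^2) < d/4"
    using L2_clip_approx[OF f, of "d/4"] d by auto
  obtain h where h: "continuous_on {0..1} h" and Mh: "(LINT x|lebesgue01. (cmod (clip M (f x) - h x))^2) < d/4"
    using clip_continuous_approx[OF L2_measurable[OF f] M, of "d/4"] d by auto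
  have [measurable]: "f \<in> borel_measurable lebesgue01" using f by (rule L2_measurable)
  have "L2 (\<lambda>x. clip M (f x))"
    using M norm_clip_le by (intro L2_bounded[where K=M]) auto
  then have "(LINT x|lebesgue01. (cmod (f x - h x))^2) < d"
    using integral_diff_squared_triangle[OF f _ continuous_imp_L2[OF h]] fM Mh by fastforce
  then show ?thesis using that h by blast
qed

lemma integral_power_01: "(LINT x|lebesgue01. x^k) = 1 / real (Suc k)"
proof -
  have "((\<lambda>x. x^k) has_integral (1^(Suc k) / Suc k - 0^(Suc k) / Suc k)) {0..1}"
  proof (rule fundamental_theorem_of_calculus)
    fix x :: real
    have "((\<lambda>x. x^(Suc k) / real (Suc k)) has_real_derivative (real (Suc k) * x^k) / real (Suc k)) (at x)"
      using DERIV_pow[of "Suc k" x] by (intro DERIV_cdivide) simp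
    then have "((\<lambda>x. x^(Suc k) / real (Suc k)) has_real_derivative x^k) (at x)"
      by simp
    then show "((\<lambda>x. x^(Suc k) / real (Suc k)) has_vector_derivative x^k) (at x within {0..1})"
      unfolding has_real_derivative_iff_has_vector_derivative by (rule has_vector_derivative_at_within)
  qed simp
  then have "((\<lambda>x. x^k) has_integral (1 / real (Suc k))) {0..1}" by simp
  moreover have "integrable lebesgue01 (\<lambda>x::real. x^k)"
    by (rule continuous_imp_integrable_real) (intro continuous_intros)
  ultimately show ?thesis by (simp add: lebesgue_integral_eq_integral integral_unique)
qed

lemma L2_W21_approx:
  assumes f: "L2 f" and d: "d > 0"
  obtains p p' where "W21 p p'" "(LINT x|lebesgue01. (cmod (f x - p x))^2) < d"
proof -
  obtain h where hc: "continuous_on {0..1} h" and fh: "(LINT x|lebesgue01. (cmod (f x - h x))^2) < d/4"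
    using L2_continuous_approx[OF f, of "d/4"] d by auto
  obtain p where p: "polynomial_function p" and hp: "\<forall>x\<in>{0..1}. cmod (h x - p x) < sqrt (d/8)"
    using Stone_Weierstrass_polynomial_function[OF compact_Icc hc, of "sqrt (d/8)"] d by auto
  obtain p' where p': "polynomial_function p'" and pd: "\<And>x. (p has_vector_derivative p' x) (at x)"
    using has_vector_derivative_polynomial_function[OF p] by blast
  have W: "W21 p p'"
    by (rule W21_if_has_vector_derivative)
      (auto intro: has_vector_derivative_at_within[OF pd] continuous_on_polymonial_function[OF p'])
  have "(LINT x|lebesgue01. (cmod (h x - p x))^2) \<le> (LINT x|lebesgue01. d/8)"
  proof (rule integral_mono)
    show "integrable lebesgue01 (\<lambda>x. (cmod (h x - p x))^2)"
      using L2_integrable_square[OF L2_diff[OF continuous_imp_L2[OF hc] W21_L2[OF W]]] .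
    show "(cmod (h x - p x))^2 \<le> d/8" if "x \<in> space lebesgue01" for x
    proof -
      have "(cmod (h x - p x))^2 \<le> (sqrt (d/8))^2"
        using hp that by (intro power_mono) (auto simp: less_imp_le)
      then show ?thesis using d by simp
    qed
  qed simp
  then have "(LINT x|lebesgue01. (cmod (h x - p x))^2) \<le> d/8"
    by (simp add: measure_restrict_space)
  then have "(LINT x|lebesgue01. (cmod (f x - p x))^2) < d"
    using integral_diff_squared_triangle[OF f continuous_imp_L2[OF hc] W21_L2[OF W]] fh d by linarith
  then show ?thesis using that W by blast
qed

lemma W21_power: "W21 (\<lambda>x. of_real x ^ n) (\<lambda>x. of_nat n * of_real x ^ (n - 1))"
proof (rule W21_if_has_vector_derivative)
  fix x :: real
  have "((\<lambda>u::complex. u ^ n) has_field_derivative (of_nat n * of_real x ^ (n - 1))) (at (of_real x))"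
    by (rule derivative_eq_intros refl)+ simp
  then show "((\<lambda>x. complex_of_real x ^ n) has_vector_derivative of_nat n * of_real x ^ (n - 1))
      (at x within {0..1})"
    by (rule has_vector_derivative_real_field)
qed (intro continuous_intros)

lemma integral_norm_power_squared:
  "(LINT x|lebesgue01. (cmod (complex_of_real x ^ n))^2) = 1 / real (Suc (2 * n))"
proof -
  have "(LINT x|lebesgue01. (cmod (complex_of_real x ^ n))^2) = (LINT x|lebesgue01. x^(2 * n))"
    by (rule Bochner_Integration.integral_cong)
      (auto simp: norm_power power_mult[symmetric] mult.commute)
  then show ?thesis by (simp add: integral_power_01)
qed

lemma mult_le_weighted_squares: "t > 0 \<Longrightarrow> (a::real) * b \<le> (t * a^2 + b^2 / t) / 2"
proof -
  assume t: "t > 0"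
  have "0 \<le> t * (a - b / t)^2" using t by simp
  also have "t * (a - b / t)^2 = t * a^2 - 2 * (a * b) + b^2 / t"
    using t by (simp add: power2_eq_square field_simps)
  finally show ?thesis by simp
qed

lemma norm_ip_le_weighted:
  assumes f: "L2 f" and g: "L2 g" and t: "t > 0"
  shows "cmod (ip f g)
    \<le> (t * (LINT x|lebesgue01. (cmod (f x))^2) + (LINT x|lebesgue01. (cmod (g x))^2) / t) / 2"
proof -
  have "cmod (ip f g) \<le> (LINT x|lebesgue01. norm (f x * cnj (g x)))"
    unfolding ip_def by (rule integral_norm_bound)
  also have "\<dots> \<le> (LINT x|lebesgue01. (t * (cmod (f x))^2 + (cmod (g x))^2 / t) / 2)"
  proof (rule integral_mono)
    show "integrable lebesgue01 (\<lambda>x. (t * (cmod (f x))^2 + (cmod (g x))^2 / t) / 2)"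
      using f g by (auto simp: L2_def)
    show "norm (f x * cnj (g x)) \<le> (t * (cmod (f x))^2 + (cmod (g x))^2 / t) / 2" for x
      using mult_le_weighted_squares[OF t, of "cmod (f x)" "cmod (g x)"] by (simp add: norm_mult)
  qed (use L2_ip_integrable[OF f g] in simp)
  also have "\<dots> = (t * (LINT x|lebesgue01. (cmod (f x))^2) + (LINT x|lebesgue01. (cmod (g x))^2) / t) / 2"
    using f g by (simp add: L2_def)
  finally show ?thesis .
qed

lemma ip_power_eventually_small:
  assumes v: "L2 v" and e: "e > 0"
  obtains N where "\<And>n. n \<ge> N \<Longrightarrow> cmod (ip (\<lambda>x. of_real x ^ n) v) \<le> e"
proof -
  define V where "V = (LINT x|lebesgue01. (cmod (v x))^2)"
  define t where "t = V / e + 1"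
  have V0: "V \<ge> 0" unfolding V_def by simp
  then have t: "t > 0" and Vt: "V / t \<le> e" unfolding t_def using e by (auto simp: field_simps add_nonneg_pos)
  obtain N :: nat where N: "t / e \<le> real N" using real_arch_simple by blast
  show ?thesis
  proof (rule that)
    fix n assume "N \<le> n"
    then have "t / e \<le> real (Suc (2 * n))" using N by linarith
    then have tn: "t / real (Suc (2 * n)) \<le> e" using e by (simp add: field_simps)
    have "cmod (ip (\<lambda>x. of_real x ^ n) v) \<le> (t / real (Suc (2 * n)) + V / t) / 2"
      using norm_ip_le_weighted[OF W21_L2[OF W21_power] v t, of n]
      unfolding V_def integral_norm_power_squared by simp
    also have "\<dots> \<le> e" using tn Vt by simp
    finally show "cmod (ip (\<lambda>x. of_real x ^ n) v) \<le> e" .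
  qed
qed

definition bc_defect :: "(real \<Rightarrow> complex) \<Rightarrow> (real \<Rightarrow> complex) \<Rightarrow> real \<Rightarrow> (real \<Rightarrow> complex) \<Rightarrow> complex" where
  "bc_defect v1 v2 \<alpha> psi = psi 1 + \<i> * ip psi v2 - exp (\<i> * of_real \<alpha>) * (psi 0 - \<i> * ip psi v1)"

lemma Agraph_if_bc_defect_eq_0:
  assumes "W21 psi psi'" "bc_defect v1 v2 \<alpha> psi = 0"
  shows "(psi, \<lambda>x. \<i> * psi' x + v1 x * (psi 0 - \<i>/2 * ip psi v1) + v2 x * (psi 1 + \<i>/2 * ip psi v2))
    \<in> Agraph v1 v2 \<alpha>"
  using assms(2) unfolding bc_defect_def by (intro AgraphI[OF assms(1)]) (simp_all add: algebra_simps)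

lemma bc_defect_diff_cmult:
  assumes "L2 v1" "L2 v2" "L2 p" "L2 q"
  shows "bc_defect v1 v2 \<alpha> (\<lambda>x. p x - c * q x) = bc_defect v1 v2 \<alpha> p - c * bc_defect v1 v2 \<alpha> q"
  unfolding bc_defect_def using assms by (simp add: ip_diff_left ip_cmult_left L2_cmult algebra_simps)

lemma bc_defect_power_eventually_large:
  assumes v1: "L2 v1" and v2: "L2 v2"
  obtains N where "\<And>n. n \<ge> N \<Longrightarrow> cmod (bc_defect v1 v2 \<alpha> (\<lambda>x. of_real x ^ n)) \<ge> 1/2"
proof -
  obtain N1 where N1: "\<And>n. n \<ge> N1 \<Longrightarrow> cmod (ip (\<lambda>x. of_real x ^ n) v1) \<le> 1/4"
    using ip_power_eventually_small[OF v1, of "1/4"] by auto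
  obtain N2 where N2: "\<And>n. n \<ge> N2 \<Longrightarrow> cmod (ip (\<lambda>x. of_real x ^ n) v2) \<le> 1/4"
    using ip_power_eventually_small[OF v2, of "1/4"] by auto
  show ?thesis
  proof (rule that)
    fix n assume n: "max (max N1 N2) 1 \<le> n"
    define w where "w = \<i> * ip (\<lambda>x. of_real x ^ n) v2 + \<i> * exp (\<i> * of_real \<alpha>) * ip (\<lambda>x. of_real x ^ n) v1"
    have "cmod w \<le> cmod (ip (\<lambda>x. of_real x ^ n) v2) + cmod (ip (\<lambda>x. of_real x ^ n) v1)"
      using norm_triangle_ineq[of "\<i> * ip (\<lambda>x. of_real x ^ n) v2"
          "\<i> * exp (\<i> * of_real \<alpha>) * ip (\<lambda>x. of_real x ^ n) v1"]
      unfolding w_def by (simp add: norm_mult)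
    then have "cmod w \<le> 1/2" using N1[of n] N2[of n] n by simp
    moreover have "bc_defect v1 v2 \<alpha> (\<lambda>x. of_real x ^ n) = 1 + w"
      unfolding bc_defect_def w_def using n by (simp add: algebra_simps)
    ultimately show "cmod (bc_defect v1 v2 \<alpha> (\<lambda>x. of_real x ^ n)) \<ge> 1/2"
      using norm_triangle_ineq4[of "1 + w" w] by simp
  qed
qed

text \<open>A \<open>W21\<close> function is moved into the domain by subtracting a multiple of a high power
  \<open>x^n\<close>: this fixes the boundary condition at an \<open>L2\<close> cost that vanishes as \<open>n \<rightarrow> \<infinity>\<close>.\<close>

lemma W21_Agraph_approx:
  assumes v1: "L2 v1" and v2: "L2 v2" and p: "W21 p p'" and d: "d > 0"
  obtains psi g where "(psi, g) \<in> Agraph v1 v2 \<alpha>" "(LINT x|lebesgue01. (cmod (p x - psi x))^2) < d"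
proof -
  obtain N1 where N1: "\<And>n. n \<ge> N1 \<Longrightarrow> cmod (bc_defect v1 v2 \<alpha> (\<lambda>x. of_real x ^ n)) \<ge> 1/2"
    using bc_defect_power_eventually_large[OF v1 v2] by blast
  obtain N2 :: nat where N2: "(4 * (cmod (bc_defect v1 v2 \<alpha> p))^2 + 1) / d \<le> real N2"
    using real_arch_simple by blast
  define n where "n = max N1 N2"
  define q where "q x = complex_of_real x ^ n" for x
  have Wq: "W21 q (\<lambda>x. of_nat n * of_real x ^ (n - 1))" unfolding q_def by (rule W21_power)
  have q: "cmod (bc_defect v1 v2 \<alpha> q) \<ge> 1/2" unfolding q_def n_def using N1 by simp
  define \<kappa> where "\<kappa> = bc_defect v1 v2 \<alpha> p / bc_defect v1 v2 \<alpha> q"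
  define psi where "psi x = p x - \<kappa> * q x" for x
  have "W21 psi (\<lambda>x. p' x + (- \<kappa>) * (of_nat n * of_real x ^ (n - 1)))"
    unfolding psi_def using W21_add[OF p W21_cmult[OF Wq, of "- \<kappa>"]] by simp
  moreover have "bc_defect v1 v2 \<alpha> psi = 0"
    unfolding psi_def bc_defect_diff_cmult[OF v1 v2 W21_L2[OF p] W21_L2[OF Wq]] \<kappa>_def using q by auto
  ultimately obtain g where "(psi, g) \<in> Agraph v1 v2 \<alpha>" by (blast dest: Agraph_if_bc_defect_eq_0)
  moreover have "(LINT x|lebesgue01. (cmod (p x - psi x))^2) < d"
  proof -
    have "cmod \<kappa> = cmod (bc_defect v1 v2 \<alpha> p) / cmod (bc_defect v1 v2 \<alpha> q)"
      unfolding \<kappa>_def by (simp add: norm_divide)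
    also have "\<dots> \<le> cmod (bc_defect v1 v2 \<alpha> p) / (1/2)" using q by (intro divide_left_mono) auto
    finally have "(cmod \<kappa>)^2 \<le> 4 * (cmod (bc_defect v1 v2 \<alpha> p))^2"
      using power_mono[of "cmod \<kappa>" "2 * cmod (bc_defect v1 v2 \<alpha> p)" 2] by simp
    moreover have "(4 * (cmod (bc_defect v1 v2 \<alpha> p))^2 + 1) / d \<le> real (Suc (2 * n))"
      using N2 unfolding n_def by linarith
    ultimately have "(cmod \<kappa>)^2 / real (Suc (2 * n)) < d"
      using d by (simp add: field_simps)
    moreover have "(LINT x|lebesgue01. (cmod (p x - psi x))^2) = (cmod \<kappa>)^2 / real (Suc (2 * n))"
      using integral_norm_power_squared[of n] by (simp add: psi_def q_def norm_mult power_mult_distrib)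
    ultimately show ?thesis by simp
  qed
  ultimately show ?thesis using that by blast
qed

lemma Agraph_dense:
  assumes v1: "L2 v1" and v2: "L2 v2" and f: "L2 f" and \<epsilon>: "\<epsilon> > 0"
  shows "\<exists>(psi, g)\<in>Agraph v1 v2 \<alpha>. L2norm (\<lambda>x. f x - psi x) < \<epsilon>"
proof -
  obtain p p' where p: "W21 p p'" and fp: "(LINT x|lebesgue01. (cmod (f x - p x))^2) < \<epsilon>^2 / 4"
    using L2_W21_approx[OF f, of "\<epsilon>^2 / 4"] \<epsilon> by auto
  obtain psi g where pg: "(psi, g) \<in> Agraph v1 v2 \<alpha>"
    and p_psi: "(LINT x|lebesgue01. (cmod (p x - psi x))^2) < \<epsilon>^2 / 4"
    using W21_Agraph_approx[OF v1 v2 p, of "\<epsilon>^2 / 4"] \<epsilon> by auto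
  have "(LINT x|lebesgue01. (cmod (f x - psi x))^2) < \<epsilon>^2"
    using integral_diff_squared_triangle[OF f W21_L2[OF p] conjunct1[OF Agraph_L2[OF v1 v2 pg]]] fp p_psi
    by linarith
  then have "L2norm (\<lambda>x. f x - psi x) < \<epsilon>"
    unfolding L2norm_def using \<epsilon> real_sqrt_less_iff[of _ "\<epsilon>^2"] by simp
  then show ?thesis using pg by blast
qed

theorem theorem5p3:
  fixes v1 v2 :: "real \<Rightarrow> complex" and \<alpha> :: real
  assumes "L2 v1" and "L2 v2" and "0 \<le> \<alpha>" and "\<alpha> < 2 * pi"
  shows "self_adjoint_graph (Agraph v1 v2 \<alpha>)
    \<and> (\<forall>z. Im z \<noteq> 0 \<longrightarrow> (\<forall>f. L2 f \<longrightarrow>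
          (\<exists>(psi, g)\<in>Agraph v1 v2 \<alpha>.
             ae_eq psi (\<lambda>x. LINT y|lebesgue_on {0..1}. res_kernel \<alpha> v1 v2 z x y * f y)
           \<and> ae_eq g (\<lambda>x. z * psi x + f x))))
    \<and> (\<forall>z. Im z \<noteq> 0 \<longrightarrow>
          (\<forall>j\<in>{1,2}. \<forall>k\<in>{1,2}. cnj (gam \<alpha> v1 v2 (cnj z) k j) = gam \<alpha> v1 v2 z j k)
        \<and> cnj (gdet \<alpha> v1 v2 (cnj z)) = gdet \<alpha> v1 v2 z
        \<and> gdet \<alpha> v1 v2 z \<noteq> 0)"
proof -
  have point: "nonreal_point v1 v2 z" if "Im z \<noteq> 0" for z
    using assms(1,2) that by unfold_locales
  have resolvent: "\<exists>(psi, g)\<in>Agraph v1 v2 \<alpha>.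
      ae_eq psi (\<lambda>x. LINT y|lebesgue_on {0..1}. res_kernel \<alpha> v1 v2 z x y * f y)
      \<and> ae_eq g (\<lambda>x. z * psi x + f x)" if "Im z \<noteq> 0" "L2 f" for z f
    by (rule nonreal_point.resolvent_in_Agraph[OF point[OF that(1)] that(2)])
  have "self_adjoint_graph (Agraph v1 v2 \<alpha>)"
  proof (rule self_adjoint_graphI[where z = \<i>])
    show "ip g chi = ip psi h" if "(psi, g) \<in> Agraph v1 v2 \<alpha>" "(chi, h) \<in> Agraph v1 v2 \<alpha>" for psi g chi h
      using Agraph_symmetric[OF assms(1,2) that] .
    show "L2 psi \<and> L2 g" if "(psi, g) \<in> Agraph v1 v2 \<alpha>" for psi g
      using Agraph_L2[OF assms(1,2) that] .
    show "\<exists>(psi, g)\<in>Agraph v1 v2 \<alpha>. ae_eq g (\<lambda>x. \<i> * psi x + f x)"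
      and "\<exists>(psi, g)\<in>Agraph v1 v2 \<alpha>. ae_eq g (\<lambda>x. cnj \<i> * psi x + f x)" if "L2 f" for f
      using resolvent[of \<i> f] resolvent[of "cnj \<i>" f] that by fastforce+
    show "\<forall>\<epsilon>>0. \<exists>(psi, g)\<in>Agraph v1 v2 \<alpha>. L2norm (\<lambda>x. f x - psi x) < \<epsilon>" if "L2 f" for f
      using Agraph_dense[OF assms(1,2) that] by blast
  qed
  moreover have "(\<forall>j\<in>{1,2}. \<forall>k\<in>{1,2}. cnj (gam \<alpha> v1 v2 (cnj z) k j) = gam \<alpha> v1 v2 z j k)
      \<and> cnj (gdet \<alpha> v1 v2 (cnj z)) = gdet \<alpha> v1 v2 z \<and> gdet \<alpha> v1 v2 z \<noteq> 0" if "Im z \<noteq> 0" for z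
    using nonreal_point.gam_cnj[OF point[OF that]] nonreal_point.gdet_cnj[OF point[OF that]]
      nonreal_point.gdet_nonzero[OF point[OF that]] by auto
  ultimately show ?thesis using resolvent by blast
qed

end
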